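(* Let $\mu$ be an isotropic $1$-unconditional log-concave probability measure on $\mathbb{R}^n$ with continuous density $f$. Then for every convex set $A\subset\mathbb{R}^n$ and every $\epsilon>0$, $$\mu\big((A+\epsilon B_2^n)\setminus A\big)\leq \sqrt{2}\,n\,\epsilon.$$ Consequently $\mu^+(\partial A)\leq\sqrt{2}\,n$ for every convex set $A$, and $\Gamma(\mu)\leq \sqrt{2}\,n$.
   Context: A probability measure on $\mathbb{R}^n$ is log-concave if it has a density $f$ with $\ln f$ concave; isotropic means barycenter $0$ and identity covariance matrix; $1$-unconditional means $f(x_1,\dots,x_n)=f(\epsilon_1x_1,\dots,\epsilon_nx_n)$ for all $\epsilon_i\in\{-1,1\}$. $B_2^n$ is the Euclidean unit ball. $\mu^+(\partial A)=\liminf_{\epsilon\to0^+}\frac{\mu((A+\epsilon B_2^n)\setminus A)}{\epsilon}$ and $\Gamma(\mu)=\sup\{\mu^+(\partial A): A \text{ a convex body (compact convex set with nonempty interior)}\}$. *)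

theory Defs
  imports "HOL-Analysis.Analysis"
begin

definition log_concave_fun :: "('a::real_vector \<Rightarrow> real) \<Rightarrow> bool" where
  "log_concave_fun f \<longleftrightarrow> (\<forall>x. 0 \<le> f x) \<and>
     (\<forall>x y t. 0 < t \<and> t < 1 \<longrightarrow>
        f x powr (1 - t) * f y powr t \<le> f ((1 - t) *\<^sub>R x + t *\<^sub>R y))"

definition prob_density :: "(real^'n \<Rightarrow> real) \<Rightarrow> bool" where
  "prob_density f \<longleftrightarrow> (\<forall>x. 0 \<le> f x) \<and> integrable lebesgue f \<and>
     (LINT x|lebesgue. f x) = 1"

definition dens_measure :: "(real^'n \<Rightarrow> real) \<Rightarrow> (real^'n) measure" where
  "dens_measure f = density lebesgue (\<lambda>x. ennreal (f x))"

definition isotropic_density :: "(real^'n \<Rightarrow> real) \<Rightarrow> bool" where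
  "isotropic_density f \<longleftrightarrow>
     (\<forall>i. integrable lebesgue (\<lambda>x. x $ i * f x) \<and> (LINT x|lebesgue. x $ i * f x) = 0) \<and>
     (\<forall>i j. integrable lebesgue (\<lambda>x. x $ i * x $ j * f x) \<and>
        (LINT x|lebesgue. x $ i * x $ j * f x) = (if i = j then 1 else 0))"

definition unconditional_density :: "(real^'n \<Rightarrow> real) \<Rightarrow> bool" where
  "unconditional_density f \<longleftrightarrow>
     (\<forall>x (s :: 'n \<Rightarrow> real). (\<forall>i. s i \<in> {-1, 1}) \<longrightarrow> f (\<chi> i. s i * x $ i) = f x)"

definition eps_nbhd :: "(real^'n) set \<Rightarrow> real \<Rightarrow> (real^'n) set" where
  "eps_nbhd A e = {a + b | a b. a \<in> A \<and> b \<in> cball 0 e}"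

definition boundary_measure :: "(real^'n) measure \<Rightarrow> (real^'n) set \<Rightarrow> ereal" where
  "boundary_measure \<mu> A =
     Liminf (at_right 0) (\<lambda>e. ereal (measure \<mu> (eps_nbhd A e - A) / e))"

definition convex_body :: "(real^'n) set \<Rightarrow> bool" where
  "convex_body A \<longleftrightarrow> compact A \<and> convex A \<and> interior A \<noteq> {}"

definition Gamma_measure :: "(real^'n) measure \<Rightarrow> ereal" where
  "Gamma_measure \<mu> = (SUP A \<in> {A. convex_body A}. boundary_measure \<mu> A)"

end

(*
  A + e B_2^n lies in the closure of A thickened by [-e, e] successively along each coordinate
  axis. An unconditional log-concave density decreases along every coordinate line away from
  the coordinate hyperplane, and a convex set meets every line in an interval; so thickening a
  convex set along e_i adds mass at most 2e times the value at 0 of the i-th marginal density.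
  By Prekopa's theorem (derived from the one-dimensional Prekopa-Leindler inequality, itself a
  consequence of Brunn-Minkowski on the line) that marginal is an even log-concave density with
  variance 1, and comparing it with the two-sided exponential density of the same peak shows
  that its value at 0 is at most 1 / sqrt 2. Summing over the n axes gives sqrt 2 * n * e.
*)
theory Submission
  imports Defs "HOL-Probability.Probability"
begin

section \<open>Lebesgue measure of convex subsets of the line\<close>

lemma ennreal_eq_top_if_unbounded:
  fixes x :: ennreal
  assumes "\<And>N. 0 \<le> N \<Longrightarrow> ennreal N \<le> x"
  shows "x = \<top>"
proof (cases x rule: ennreal_cases)
  case (real y)
  then show ?thesis using assms[of "y + 1"] by simp
qed simp

lemma ennreal_less_imp_real_between:
  assumes "ennreal x < y"
  obtains u where "x < u" "0 < u" "ennreal u \<le> y"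
proof -
  obtain w where w: "ennreal x < w" "w < y" using assms dense by blast
  then obtain u where u: "w = ennreal u" "0 \<le> u" by (cases w rule: ennreal_cases) auto
  with w have "x < u" "0 < u" by (cases "0 \<le> x"; auto simp: ennreal_less_iff)+
  with w u that show ?thesis by simp
qed

lemma emeasure_lborel_greaterThan: "emeasure lborel {a::real<..} = \<top>"
proof (rule ennreal_eq_top_if_unbounded)
  fix N :: real assume "0 \<le> N"
  then have "ennreal N = emeasure lborel {a + 1 .. a + 1 + N}" by simp
  also have "\<dots> \<le> emeasure lborel {a<..}" by (rule emeasure_mono) auto
  finally show "ennreal N \<le> emeasure lborel {a<..}" .
qed

lemma convex_real_atLeastAtMost_subset:
  fixes S :: "real set"
  assumes "convex S" "a \<in> S" "b \<in> S"
  shows "{a..b} \<subseteq> S"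
proof (cases "a \<le> b")
  case True
  then show ?thesis using assms convex_contains_segment closed_segment_eq_real_ivl1 by metis
qed simp

lemma convex_real_sets_borel: "convex (S::real set) \<Longrightarrow> S \<in> sets borel"
  by (intro real_interval_borel_measurable) (simp add: is_interval_convex_1)

lemma emeasure_convex_real_ge:
  fixes S :: "real set"
  assumes "convex S" "a \<in> S" "b \<in> S"
  shows "ennreal (b - a) \<le> emeasure lborel S"
proof (cases "a \<le> b")
  case True
  have "emeasure lborel {a..b} \<le> emeasure lborel S"
    using assms by (intro emeasure_mono convex_real_atLeastAtMost_subset) (auto intro: convex_real_sets_borel)
  then show ?thesis using True by simp
qed (simp add: ennreal_neg)

lemma emeasure_convex_real:
  fixes S :: "real set"
  assumes "convex S"
  shows "emeasure lborel S = (SUP a\<in>S. SUP b\<in>S. ennreal (b - a))" (is "_ = ?L")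
proof (rule antisym)
  show "?L \<le> emeasure lborel S"
    using emeasure_convex_real_ge[OF assms] by (intro SUP_least) auto
  show "emeasure lborel S \<le> ?L"
  proof (cases "?L = \<top> \<or> S = {}")
    case False
    then obtain M where M: "?L = ennreal M" "0 \<le> M" and "S \<noteq> {}"
      by (cases ?L rule: ennreal_cases) auto
    have diam: "b \<le> a + M" if "a \<in> S" "b \<in> S" for a b
    proof -
      have "ennreal (b - a) \<le> ennreal M" unfolding M(1)[symmetric] using that by (auto intro: SUP_upper2)
      then show ?thesis using M(2) by (simp add: ennreal_le_iff)
    qed
    obtain c where "c \<in> S" using \<open>S \<noteq> {}\<close> by blast
    then have bdd: "bdd_above S" "bdd_below S"
      using diam by (auto intro!: bdd_aboveI[of _ "c + M"] bdd_belowI[of _ "c - M"] simp: algebra_simps)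
    have "Sup S - M \<le> Inf S"
      using \<open>S \<noteq> {}\<close> diam by (intro cInf_greatest) (auto intro!: cSup_least simp: algebra_simps)
    have "emeasure lborel S \<le> emeasure lborel {Inf S..Sup S}"
      using bdd by (intro emeasure_mono) (auto intro: cInf_lower cSup_upper)
    also have "\<dots> \<le> ennreal M"
      using \<open>Sup S - M \<le> Inf S\<close> M(2) by (auto simp: emeasure_lborel_Icc_eq intro: ennreal_leI)
    finally show ?thesis using M(1) by simp
  next
    case True
    then show ?thesis by (metis emeasure_empty top_greatest zero_le)
  qed
qed

lemma SUP_add_le_ennreal:
  fixes f g :: "_ \<Rightarrow> ennreal"
  assumes "I \<noteq> {}" "J \<noteq> {}" "\<And>i j. i \<in> I \<Longrightarrow> j \<in> J \<Longrightarrow> f i + g j \<le> z"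
  shows "(SUP i\<in>I. f i) + (SUP j\<in>J. g j) \<le> z"
  unfolding ennreal_SUP_add_left[OF assms(1), symmetric] ennreal_SUP_add_right[OF assms(2)]
  using assms(3) by (intro SUP_least) auto

lemma brunn_minkowski_real:
  fixes S0 S1 T :: "real set"
  assumes l: "0 \<le> l" "l \<le> 1" and conv: "convex S0" "convex S1" "convex T"
    and ne: "S0 \<noteq> {}" "S1 \<noteq> {}"
    and mix: "\<And>a b. a \<in> S0 \<Longrightarrow> b \<in> S1 \<Longrightarrow> (1 - l) * a + l * b \<in> T"
  shows "ennreal (1 - l) * emeasure lborel S0 + ennreal l * emeasure lborel S1 \<le> emeasure lborel T"
proof -
  have "ennreal (1 - l) * ennreal (b0 - a0) + ennreal l * ennreal (b1 - a1) \<le> emeasure lborel T"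
    if "a0 \<in> S0" "b0 \<in> S0" "a1 \<in> S1" "b1 \<in> S1" for a0 b0 a1 b1
  proof -
    define lo where "lo = (1 - l) * min a0 b0 + l * min a1 b1"
    define hi where "hi = (1 - l) * max a0 b0 + l * max a1 b1"
    have "lo \<in> T" "hi \<in> T" unfolding lo_def hi_def using mix that by (simp_all add: min_def max_def)
    have "ennreal (1 - l) * ennreal (b0 - a0) + ennreal l * ennreal (b1 - a1)
        \<le> ennreal (1 - l) * ennreal \<bar>b0 - a0\<bar> + ennreal l * ennreal \<bar>b1 - a1\<bar>"
      by (intro add_mono mult_left_mono ennreal_leI) auto
    also have "\<dots> = ennreal (hi - lo)"
    proof -
      have "hi - lo = (1 - l) * \<bar>b0 - a0\<bar> + l * \<bar>b1 - a1\<bar>"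
        unfolding hi_def lo_def by (simp add: algebra_simps abs_if min_def max_def)
      then show ?thesis using l by (simp add: ennreal_plus ennreal_mult)
    qed
    also have "\<dots> \<le> emeasure lborel T" by (rule emeasure_convex_real_ge[OF conv(3) \<open>lo \<in> T\<close> \<open>hi \<in> T\<close>])
    finally show ?thesis .
  qed
  then show ?thesis
    unfolding emeasure_convex_real[OF conv(1)] emeasure_convex_real[OF conv(2)] SUP_mult_left_ennreal
    using ne by (intro SUP_add_le_ennreal) auto
qed

section \<open>The Prekopa-Leindler inequality on the line\<close>

definition quasiconcave :: "('a::real_vector \<Rightarrow> ennreal) \<Rightarrow> bool" where
  "quasiconcave g \<longleftrightarrow> (\<forall>r. convex {x. ennreal r < g x})"

lemma borel_measurable_quasiconcave:
  fixes g :: "real \<Rightarrow> ennreal"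
  assumes "quasiconcave g"
  shows "g \<in> borel_measurable borel"
proof (rule borel_measurableI_greater)
  fix y :: ennreal
  show "{x \<in> space borel. y < g x} \<in> sets borel"
  proof (cases y rule: ennreal_cases)
    case (real r)
    then show ?thesis using assms convex_real_sets_borel by (simp add: quasiconcave_def)
  qed simp
qed

lemma quasiconcave_min: "quasiconcave g \<Longrightarrow> quasiconcave (\<lambda>x. min (g x) c)"
  unfolding quasiconcave_def
proof
  fix r assume "\<forall>r. convex {x. ennreal r < g x}"
  then have "convex ({x. ennreal r < g x} \<inter> (if ennreal r < c then UNIV else {}))"
    by (intro convex_Int) auto
  moreover have "{x. ennreal r < min (g x) c} = {x. ennreal r < g x} \<inter> (if ennreal r < c then UNIV else {})"
    by auto
  ultimately show "convex {x. ennreal r < min (g x) c}" by simp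
qed

lemma nn_integral_layer_cake:
  fixes g :: "real \<Rightarrow> ennreal"
  assumes [measurable]: "g \<in> borel_measurable borel" and K: "0 < K"
  shows "(\<integral>\<^sup>+x. g x \<partial>lborel) =
    ennreal K * (\<integral>\<^sup>+r. emeasure lborel {x. ennreal (K * r) < g x} * indicator {0<..} r \<partial>lborel)"
proof -
  have level: "g x = ennreal K * emeasure lborel {r. 0 < r \<and> ennreal (K * r) < g x}" for x
  proof (cases "g x" rule: ennreal_cases)
    case (real v)
    then have "{r. 0 < r \<and> ennreal (K * r) < g x} = {0<..<v / K}"
      using K by (auto simp: ennreal_less_iff field_simps)
    moreover have "ennreal K * ennreal (v / K) = ennreal v"
      using K real by (simp flip: ennreal_mult)
    ultimately show ?thesis using real K by auto
  next
    case top
    then have "{r. 0 < r \<and> ennreal (K * r) < g x} = {0<..}" by auto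
    then show ?thesis using top K by (simp add: ennreal_mult_top emeasure_lborel_greaterThan)
  qed
  have "(\<integral>\<^sup>+x. g x \<partial>lborel) =
      ennreal K * (\<integral>\<^sup>+x. (\<integral>\<^sup>+r. indicator {r. 0 < r \<and> ennreal (K * r) < g x} r \<partial>lborel) \<partial>lborel)"
    by (subst level) (simp add: nn_integral_indicator nn_integral_cmult)
  also have "(\<integral>\<^sup>+x. (\<integral>\<^sup>+r. indicator {r. 0 < r \<and> ennreal (K * r) < g x} r \<partial>lborel) \<partial>lborel)
      = (\<integral>\<^sup>+r. (\<integral>\<^sup>+x. indicator {0<..} r * indicator {x. ennreal (K * r) < g x} x \<partial>lborel) \<partial>lborel)"
    by (subst lborel_pair.Fubini') (auto intro!: nn_integral_cong split: split_indicator)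
  also have "\<dots> = (\<integral>\<^sup>+r. emeasure lborel {x. ennreal (K * r) < g x} * indicator {0<..} r \<partial>lborel)"
    by (simp add: nn_integral_cmult mult.commute)
  finally show ?thesis .
qed

lemma borel_measurable_emeasure_superlevel:
  fixes g :: "real \<Rightarrow> ennreal"
  assumes [measurable]: "g \<in> borel_measurable borel"
  shows "(\<lambda>r. emeasure lborel {t. ennreal (c * r) < g t}) \<in> borel_measurable borel"
proof -
  have "{p \<in> space (lborel \<Otimes>\<^sub>M lborel). ennreal (c * fst p) < g (snd p)} \<in> sets (lborel \<Otimes>\<^sub>M lborel)"
    by measurable
  from lborel.measurable_emeasure_Pair[OF this] show ?thesis
    by (simp add: space_pair_measure vimage_def)
qed

lemma SUP_eq_ennreal_pos:
  fixes f :: "real \<Rightarrow> ennreal"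
  assumes "(SUP t. f t) < \<top>" "0 < (\<integral>\<^sup>+t. f t \<partial>lborel)"
  obtains M where "(SUP t. f t) = ennreal M" "0 < M"
proof -
  obtain M where M: "(SUP t. f t) = ennreal M" "0 \<le> M"
    using assms(1) by (cases "SUP t. f t" rule: ennreal_cases) auto
  have "M \<noteq> 0"
  proof
    assume "M = 0"
    then have "f t = 0" for t using M(1) by (metis SUP_upper UNIV_I ennreal_0 le_zero_eq)
    then show False using assms(2) by simp
  qed
  with M that show ?thesis by simp
qed

lemma superlevel_nonempty_iff:
  fixes f :: "real \<Rightarrow> ennreal"
  assumes M: "(SUP t. f t) = ennreal M" "0 < M" and r: "0 < r"
  shows "{t. ennreal (M * r) < f t} \<noteq> {} \<longleftrightarrow> r < 1"
proof
  assume "{t. ennreal (M * r) < f t} \<noteq> {}"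
  then obtain t where "ennreal (M * r) < f t" by blast
  also have "f t \<le> ennreal M" unfolding M(1)[symmetric] by (rule SUP_upper) simp
  finally show "r < 1" using M(2) r by (simp add: ennreal_less_iff)
next
  assume "r < 1"
  then have "ennreal (M * r) < (SUP t. f t)" using M r by (simp add: ennreal_less_iff)
  then show "{t. ennreal (M * r) < f t} \<noteq> {}" by (auto simp: less_SUP_iff)
qed

text \<open>Normalising by the suprema makes both superlevel sets nonempty exactly for \<open>r < 1\<close>,
  so the one-dimensional Brunn-Minkowski inequality applies level by level.\<close>

lemma prekopa_leindler_superlevels:
  fixes f0 f1 h :: "real \<Rightarrow> ennreal"
  assumes l: "0 < l" "l < 1"
    and q: "quasiconcave f0" "quasiconcave f1" "quasiconcave h"
    and hyp: "\<And>a b u v. 0 \<le> u \<Longrightarrow> 0 \<le> v \<Longrightarrow> ennreal u \<le> f0 a \<Longrightarrow> ennreal v \<le> f1 b \<Longrightarrow>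
       ennreal (u powr (1 - l) * v powr l) \<le> h ((1 - l) * a + l * b)"
    and M0: "(SUP t. f0 t) = ennreal M0" "0 < M0" and M1: "(SUP t. f1 t) = ennreal M1" "0 < M1"
    and r: "0 < r"
  shows "ennreal (1 - l) * emeasure lborel {t. ennreal (M0 * r) < f0 t}
           + ennreal l * emeasure lborel {t. ennreal (M1 * r) < f1 t}
         \<le> emeasure lborel {t. ennreal (M0 powr (1 - l) * M1 powr l * r) < h t}"
proof (cases "r < 1")
  case False
  then show ?thesis
    using superlevel_nonempty_iff[OF M0 r] superlevel_nonempty_iff[OF M1 r] by simp
next
  case True
  show ?thesis
  proof (rule brunn_minkowski_real)
    show "convex {t. ennreal (M0 * r) < f0 t}" "convex {t. ennreal (M1 * r) < f1 t}"
      "convex {t. ennreal (M0 powr (1 - l) * M1 powr l * r) < h t}"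
      using q by (simp_all add: quasiconcave_def)
    show "{t. ennreal (M0 * r) < f0 t} \<noteq> {}" "{t. ennreal (M1 * r) < f1 t} \<noteq> {}"
      using superlevel_nonempty_iff[OF M0 r] superlevel_nonempty_iff[OF M1 r] True by simp_all
  next
    fix a b assume "a \<in> {t. ennreal (M0 * r) < f0 t}" "b \<in> {t. ennreal (M1 * r) < f1 t}"
    then obtain u v where u: "M0 * r < u" "ennreal u \<le> f0 a" and v: "M1 * r < v" "ennreal v \<le> f1 b"
      by (auto elim!: ennreal_less_imp_real_between)
    have pos: "0 < M0 * r" "0 < M1 * r" using M0 M1 r by simp_all
    have "M0 powr (1 - l) * M1 powr l * r = (M0 * r) powr (1 - l) * (M1 * r) powr l"
      using M0 M1 r by (simp add: powr_mult flip: powr_add)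
    also have "\<dots> < u powr (1 - l) * v powr l"
      using pos l u v by (intro mult_strict_mono powr_less_mono2) auto
    finally have "ennreal (M0 powr (1 - l) * M1 powr l * r) < ennreal (u powr (1 - l) * v powr l)"
      using M0 M1 r by (subst ennreal_less_iff) auto
    also have "\<dots> \<le> h ((1 - l) * a + l * b)"
      using u v pos by (intro hyp) auto
    finally show "(1 - l) * a + l * b \<in> {t. ennreal (M0 powr (1 - l) * M1 powr l * r) < h t}" by simp
  qed (use l in auto)
qed

lemma nn_integral_superlevels_ge:
  fixes g :: "real \<Rightarrow> ennreal"
  assumes "g \<in> borel_measurable borel" "0 < M" "0 \<le> u" "ennreal u \<le> (\<integral>\<^sup>+t. g t \<partial>lborel)"
  shows "ennreal (u / M) \<le> (\<integral>\<^sup>+r. emeasure lborel {t. ennreal (M * r) < g t} * indicator {0<..} r \<partial>lborel)"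
proof -
  have "ennreal M * ennreal (u / M) \<le> ennreal M * (\<integral>\<^sup>+r. emeasure lborel {t. ennreal (M * r) < g t} * indicator {0<..} r \<partial>lborel)"
    using assms nn_integral_layer_cake[OF assms(1,2)] by (simp flip: ennreal_mult)
  then show ?thesis using assms(2) by (simp add: ennreal_mult_le_mult_iff)
qed

lemma geometric_mean_le_scaled_arithmetic_mean:
  fixes u v M0 M1 l :: real
  assumes "0 < l" "l < 1" "0 < u" "0 < v" "0 < M0" "0 < M1"
  shows "u powr (1 - l) * v powr l \<le> M0 powr (1 - l) * M1 powr l * ((1 - l) * (u / M0) + l * (v / M1))"
proof -
  have "u powr (1 - l) * v powr l = M0 powr (1 - l) * M1 powr l * ((u / M0) powr (1 - l) * (v / M1) powr l)"
    using assms by (simp add: powr_divide field_simps)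
  also have "\<dots> \<le> M0 powr (1 - l) * M1 powr l * ((1 - l) * (u / M0) + l * (v / M1))"
    using Youngs_inequality_0[of "1 - l" l "u / M0" "v / M1"] assms by simp
  finally show ?thesis .
qed

lemma prekopa_leindler_real_finite_SUP:
  fixes f0 f1 h :: "real \<Rightarrow> ennreal"
  assumes l: "0 < l" "l < 1"
    and q: "quasiconcave f0" "quasiconcave f1" "quasiconcave h"
    and hyp: "\<And>a b u v. 0 \<le> u \<Longrightarrow> 0 \<le> v \<Longrightarrow> ennreal u \<le> f0 a \<Longrightarrow> ennreal v \<le> f1 b \<Longrightarrow>
       ennreal (u powr (1 - l) * v powr l) \<le> h ((1 - l) * a + l * b)"
    and fin: "(SUP t. f0 t) < \<top>" "(SUP t. f1 t) < \<top>"
    and u: "0 < u" "ennreal u \<le> (\<integral>\<^sup>+t. f0 t \<partial>lborel)"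
    and v: "0 < v" "ennreal v \<le> (\<integral>\<^sup>+t. f1 t \<partial>lborel)"
  shows "ennreal (u powr (1 - l) * v powr l) \<le> (\<integral>\<^sup>+t. h t \<partial>lborel)"
proof -
  note [measurable] = borel_measurable_quasiconcave[OF q(1)] borel_measurable_quasiconcave[OF q(2)]
    borel_measurable_quasiconcave[OF q(3)]
  have "0 < (\<integral>\<^sup>+t. f0 t \<partial>lborel)" "0 < (\<integral>\<^sup>+t. f1 t \<partial>lborel)"
    using u v by (metis ennreal_less_zero_iff order.strict_trans2)+
  then obtain M0 M1 where M0: "(SUP t. f0 t) = ennreal M0" "0 < M0"
    and M1: "(SUP t. f1 t) = ennreal M1" "0 < M1"
    using fin by (metis SUP_eq_ennreal_pos)
  define K where "K = M0 powr (1 - l) * M1 powr l"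
  have K: "0 < K" using M0 M1 by (simp add: K_def)
  define A0 where "A0 r = emeasure lborel {t. ennreal (M0 * r) < f0 t}" for r
  define A1 where "A1 r = emeasure lborel {t. ennreal (M1 * r) < f1 t}" for r
  define H where "H r = emeasure lborel {t. ennreal (K * r) < h t}" for r
  have [measurable]: "A0 \<in> borel_measurable borel" "A1 \<in> borel_measurable borel" "H \<in> borel_measurable borel"
    unfolding A0_def A1_def H_def by (simp_all add: borel_measurable_emeasure_superlevel)
  define I0 where "I0 = (\<integral>\<^sup>+r. A0 r * indicator {0<..} r \<partial>lborel)"
  define I1 where "I1 = (\<integral>\<^sup>+r. A1 r * indicator {0<..} r \<partial>lborel)"
  have "ennreal ((1 - l) * (u / M0) + l * (v / M1)) = ennreal (1 - l) * ennreal (u / M0) + ennreal l * ennreal (v / M1)"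
    using l u v M0 M1 by (simp add: ennreal_plus ennreal_mult del: times_divide_eq_right)
  also have "\<dots> \<le> ennreal (1 - l) * I0 + ennreal l * I1"
    unfolding I0_def I1_def A0_def A1_def
    using nn_integral_superlevels_ge[of f0 M0 u] nn_integral_superlevels_ge[of f1 M1 v] M0 M1 u v
    by (intro add_mono mult_left_mono) auto
  also have "\<dots> = (\<integral>\<^sup>+r. ennreal (1 - l) * (A0 r * indicator {0<..} r) \<partial>lborel)
      + (\<integral>\<^sup>+r. ennreal l * (A1 r * indicator {0<..} r) \<partial>lborel)"
    unfolding I0_def I1_def by (simp add: nn_integral_cmult)
  also have "\<dots> = (\<integral>\<^sup>+r. (ennreal (1 - l) * A0 r + ennreal l * A1 r) * indicator {0<..} r \<partial>lborel)"
    unfolding distrib_right mult.assoc by (rule nn_integral_add[symmetric]) measurable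
  also have "\<dots> \<le> (\<integral>\<^sup>+r. H r * indicator {0<..} r \<partial>lborel)"
    unfolding A0_def A1_def H_def K_def
    by (intro nn_integral_mono)
      (auto split: split_indicator intro: prekopa_leindler_superlevels[OF l q hyp M0 M1])
  finally have levels: "ennreal ((1 - l) * (u / M0) + l * (v / M1)) \<le> (\<integral>\<^sup>+r. H r * indicator {0<..} r \<partial>lborel)" .
  have "ennreal (u powr (1 - l) * v powr l) \<le> ennreal (K * ((1 - l) * (u / M0) + l * (v / M1)))"
    unfolding K_def using geometric_mean_le_scaled_arithmetic_mean l u v M0 M1 by (intro ennreal_leI) auto
  also have "\<dots> = ennreal K * ennreal ((1 - l) * (u / M0) + l * (v / M1))"
    using K l u v M0 M1 by (intro ennreal_mult) auto
  also have "\<dots> \<le> ennreal K * (\<integral>\<^sup>+r. H r * indicator {0<..} r \<partial>lborel)"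
    by (intro mult_left_mono levels) simp
  also have "\<dots> = (\<integral>\<^sup>+t. h t \<partial>lborel)"
    unfolding H_def by (rule nn_integral_layer_cake[symmetric]) (use K in simp_all)
  finally show ?thesis .
qed

lemma nn_integral_SUP_min_of_nat:
  assumes [measurable]: "f \<in> borel_measurable M"
  shows "(SUP n. \<integral>\<^sup>+x. min (f x) (of_nat n) \<partial>M) = (\<integral>\<^sup>+x. f x \<partial>M)"
proof -
  have "(SUP n. \<integral>\<^sup>+x. min (f x) (of_nat n) \<partial>M) = (\<integral>\<^sup>+x. (SUP n. min (f x) (of_nat n)) \<partial>M)"
    by (rule nn_integral_monotone_convergence_SUP[symmetric])
      (auto simp: incseq_def le_fun_def intro!: min.coboundedI2)
  also have "\<dots> = (\<integral>\<^sup>+x. f x \<partial>M)"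
    by (simp add: inf_min[symmetric] inf_SUP[symmetric] ennreal_SUP_of_nat_eq_top)
  finally show ?thesis .
qed

lemma nn_integral_truncation_gt:
  assumes "g \<in> borel_measurable M" "c < (\<integral>\<^sup>+x. g x \<partial>M)"
  obtains n :: nat where "c < (\<integral>\<^sup>+x. min (g x) (of_nat n) \<partial>M)"
proof -
  have "c < (SUP n. \<integral>\<^sup>+x. min (g x) (of_nat n) \<partial>M)"
    using assms by (simp add: nn_integral_SUP_min_of_nat)
  then show ?thesis using that by (auto simp: less_SUP_iff)
qed

lemma ennreal_le_if_scaled_le:
  assumes "\<And>s. 0 < s \<Longrightarrow> s < 1 \<Longrightarrow> ennreal (s * x) \<le> z"
  shows "ennreal x \<le> z"
proof (cases z rule: ennreal_cases)
  case (real y)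
  have "x \<le> y"
  proof (rule field_le_mult_one_interval)
    fix s :: real assume "0 < s" "s < 1"
    then show "s * x \<le> y" using assms[of s] real by (auto simp add: ennreal_le_iff2)
  qed
  then show ?thesis using real by (simp add: ennreal_leI)
qed simp

theorem prekopa_leindler_real:
  fixes f0 f1 h :: "real \<Rightarrow> ennreal"
  assumes l: "0 < l" "l < 1"
    and q: "quasiconcave f0" "quasiconcave f1" "quasiconcave h"
    and hyp: "\<And>a b u v. 0 \<le> u \<Longrightarrow> 0 \<le> v \<Longrightarrow> ennreal u \<le> f0 a \<Longrightarrow> ennreal v \<le> f1 b \<Longrightarrow>
       ennreal (u powr (1 - l) * v powr l) \<le> h ((1 - l) * a + l * b)"
    and u: "0 \<le> u" "ennreal u \<le> (\<integral>\<^sup>+t. f0 t \<partial>lborel)"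
    and v: "0 \<le> v" "ennreal v \<le> (\<integral>\<^sup>+t. f1 t \<partial>lborel)"
  shows "ennreal (u powr (1 - l) * v powr l) \<le> (\<integral>\<^sup>+t. h t \<partial>lborel)"
proof (cases "u = 0 \<or> v = 0")
  case False
  then have up: "0 < u" and vp: "0 < v" using u v by auto
  show ?thesis
  proof (rule ennreal_le_if_scaled_le)
    fix s :: real assume s: "0 < s" "s < 1"
    have "ennreal (s * u) < ennreal u" "ennreal (s * v) < ennreal v"
      using s up vp by (simp_all add: ennreal_less_iff)
    then have su: "ennreal (s * u) < (\<integral>\<^sup>+t. f0 t \<partial>lborel)" and sv: "ennreal (s * v) < (\<integral>\<^sup>+t. f1 t \<partial>lborel)"
      using u(2) v(2) by (auto intro: order.strict_trans2)
    \<comment> \<open>Truncating \<open>f0\<close> and \<open>f1\<close> makes their suprema finite.\<close>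
    obtain n :: nat where n: "ennreal (s * u) < (\<integral>\<^sup>+t. min (f0 t) (of_nat n) \<partial>lborel)"
      by (rule nn_integral_truncation_gt[OF _ su]) (simp add: borel_measurable_quasiconcave[OF q(1)])
    obtain m :: nat where m: "ennreal (s * v) < (\<integral>\<^sup>+t. min (f1 t) (of_nat m) \<partial>lborel)"
      by (rule nn_integral_truncation_gt[OF _ sv]) (simp add: borel_measurable_quasiconcave[OF q(2)])
    have "ennreal ((s * u) powr (1 - l) * (s * v) powr l) \<le> (\<integral>\<^sup>+t. h t \<partial>lborel)"
    proof (rule prekopa_leindler_real_finite_SUP[OF l quasiconcave_min[OF q(1)] quasiconcave_min[OF q(2)] q(3)])
      have "(SUP t. min (g t) (of_nat k)) < \<top>" for g :: "real \<Rightarrow> ennreal" and k :: nat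
      proof -
        have "(SUP t. min (g t) (of_nat k)) \<le> of_nat k" by (rule SUP_least) simp
        then show ?thesis using of_nat_less_top le_less_trans by blast
      qed
      then show "(SUP t. min (f0 t) (of_nat n)) < \<top>" "(SUP t. min (f1 t) (of_nat m)) < \<top>" by blast+
    qed (use hyp s up vp n m in auto)
    also have "(s * u) powr (1 - l) * (s * v) powr l = s * (u powr (1 - l) * v powr l)"
      using s up vp by (simp add: powr_mult flip: powr_add)
    finally show "ennreal (s * (u powr (1 - l) * v powr l)) \<le> (\<integral>\<^sup>+t. h t \<partial>lborel)" .
  qed
qed auto

section \<open>Log-concave functions, marginals and Prekopa's theorem\<close>

lemma powr_one_minus_mult_powr_self:
  fixes x :: real
  assumes "0 \<le> x"
  shows "x powr (1 - l) * x powr l = x"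
  using assms by (cases "x = 0") (simp_all flip: powr_add)

lemma ennreal_le_if_real_le:
  fixes a b :: ennreal
  assumes "\<And>w. 0 \<le> w \<Longrightarrow> ennreal w \<le> a \<Longrightarrow> ennreal w \<le> b"
  shows "a \<le> b"
proof (cases a rule: ennreal_cases)
  case top
  then have "b = \<top>" using assms by (intro ennreal_eq_top_if_unbounded) simp
  then show ?thesis by simp
qed (use assms in auto)

text \<open>Log-concavity of an \<open>ennreal\<close>-valued function, phrased through real minorants of its
  values so that no powers of \<open>\<infinity>\<close> occur.\<close>

definition log_concave_ennreal :: "('a::real_vector \<Rightarrow> ennreal) \<Rightarrow> bool" where
  "log_concave_ennreal F \<longleftrightarrow> (\<forall>x y l u v. 0 < l \<longrightarrow> l < 1 \<longrightarrow> 0 \<le> u \<longrightarrow> 0 \<le> v \<longrightarrow>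
     ennreal u \<le> F x \<longrightarrow> ennreal v \<le> F y \<longrightarrow>
     ennreal (u powr (1 - l) * v powr l) \<le> F ((1 - l) *\<^sub>R x + l *\<^sub>R y))"

lemma log_concave_ennrealD:
  assumes "log_concave_ennreal F" "0 < l" "l < 1" "0 \<le> u" "0 \<le> v" "ennreal u \<le> F x" "ennreal v \<le> F y"
  shows "ennreal (u powr (1 - l) * v powr l) \<le> F ((1 - l) *\<^sub>R x + l *\<^sub>R y)"
  using assms unfolding log_concave_ennreal_def by blast

lemma log_concave_ennreal_of_real:
  assumes "log_concave_fun f"
  shows "log_concave_ennreal (\<lambda>x. ennreal (f x))"
  unfolding log_concave_ennreal_def
proof (intro allI impI)
  fix x y and l u v :: real
  assume l: "0 < l" "l < 1" and uv: "0 \<le> u" "0 \<le> v"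
    and "ennreal u \<le> ennreal (f x)" "ennreal v \<le> ennreal (f y)"
  moreover have f0: "0 \<le> f z" for z using assms by (simp add: log_concave_fun_def)
  ultimately have "u \<le> f x" "v \<le> f y" by (simp_all add: ennreal_le_iff)
  then have "u powr (1 - l) * v powr l \<le> f x powr (1 - l) * f y powr l"
    using uv l by (intro mult_mono powr_mono2) auto
  also have "\<dots> \<le> f ((1 - l) *\<^sub>R x + l *\<^sub>R y)"
    using assms l by (simp add: log_concave_fun_def)
  finally show "ennreal (u powr (1 - l) * v powr l) \<le> ennreal (f ((1 - l) *\<^sub>R x + l *\<^sub>R y))"
    by (rule ennreal_leI)
qed

lemma log_concave_ennreal_line:
  assumes "log_concave_ennreal F"
  shows "log_concave_ennreal (\<lambda>t::real. F (a + t *\<^sub>R v))"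
  unfolding log_concave_ennreal_def
proof (intro allI impI)
  fix s t l u w :: real
  assume "0 < l" "l < 1" "0 \<le> u" "0 \<le> w" "ennreal u \<le> F (a + s *\<^sub>R v)" "ennreal w \<le> F (a + t *\<^sub>R v)"
  then have "ennreal (u powr (1 - l) * w powr l) \<le> F ((1 - l) *\<^sub>R (a + s *\<^sub>R v) + l *\<^sub>R (a + t *\<^sub>R v))"
    using assms by (intro log_concave_ennrealD)
  also have "(1 - l) *\<^sub>R (a + s *\<^sub>R v) + l *\<^sub>R (a + t *\<^sub>R v) = a + ((1 - l) *\<^sub>R s + l *\<^sub>R t) *\<^sub>R v"
    by (simp add: algebra_simps)
  finally show "ennreal (u powr (1 - l) * w powr l) \<le> F (a + ((1 - l) *\<^sub>R s + l *\<^sub>R t) *\<^sub>R v)" .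
qed

lemma quasiconcave_if_log_concave_ennreal:
  assumes "log_concave_ennreal F"
  shows "quasiconcave F"
  unfolding quasiconcave_def
proof (intro allI convexI)
  fix r and x y and a b :: real
  assume x: "x \<in> {x. ennreal r < F x}" and y: "y \<in> {x. ennreal r < F x}"
    and ab: "0 \<le> a" "0 \<le> b" "a + b = 1"
  show "a *\<^sub>R x + b *\<^sub>R y \<in> {x. ennreal r < F x}"
  proof (cases "b = 0 \<or> b = 1")
    case True
    then show ?thesis using x y ab by auto
  next
    case False
    then have b: "0 < b" "b < 1" and a: "a = 1 - b" using ab by auto
    have "ennreal r < min (F x) (F y)" using x y by simp
    then obtain w where w: "r < w" "0 < w" "ennreal w \<le> min (F x) (F y)"
      by (rule ennreal_less_imp_real_between)
    have "ennreal r < ennreal w" using w by (cases "0 \<le> r") (auto simp: ennreal_less_iff ennreal_neg)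
    also have "ennreal w = ennreal (w powr (1 - b) * w powr b)"
      using w by (simp add: powr_one_minus_mult_powr_self)
    also have "\<dots> \<le> F ((1 - b) *\<^sub>R x + b *\<^sub>R y)"
      using w b by (intro log_concave_ennrealD[OF assms]) auto
    finally show ?thesis using a by simp
  qed
qed

lemma log_concave_ennreal_symmetric_le:
  assumes "log_concave_ennreal F" "F (c - y) = F (c + y)"
  shows "F (c + y) \<le> F c"
proof (rule ennreal_le_if_real_le)
  fix w :: real assume w: "0 \<le> w" "ennreal w \<le> F (c + y)"
  have "ennreal w = ennreal (w powr (1 - 1/2) * w powr (1/2))"
    using w by (simp only: powr_one_minus_mult_powr_self)
  also have "\<dots> \<le> F ((1 - 1/2) *\<^sub>R (c + y) + (1/2) *\<^sub>R (c - y))"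
    using w assms by (intro log_concave_ennrealD) auto
  also have "(1 - 1/2) *\<^sub>R (c + y) + (1/2) *\<^sub>R (c - y) = c"
    by (simp add: algebra_simps scaleR_add_left[symmetric] del: scaleR_add_left)
  finally show "ennreal w \<le> F c" .
qed

text \<open>\<open>x + (\<Sum>b\<in>J. (z b - x \<bullet> b) *\<^sub>R b)\<close> is \<open>x\<close> with its coordinates in \<open>J\<close> replaced by \<open>z\<close>:
  the marginal integrates out the coordinates in \<open>J\<close> and keeps the others of \<open>x\<close>.\<close>

definition marginal :: "('a::euclidean_space \<Rightarrow> ennreal) \<Rightarrow> 'a set \<Rightarrow> 'a \<Rightarrow> ennreal" where
  "marginal f J x = (\<integral>\<^sup>+z. f (x + (\<Sum>b\<in>J. (z b - x \<bullet> b) *\<^sub>R b)) \<partial>(\<Pi>\<^sub>M b\<in>J. lborel))"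

lemma marginal_empty: "marginal f {} = f"
  unfolding marginal_def PiM_empty by (simp add: nn_integral_count_space_finite fun_eq_iff)

lemma marginal_insert:
  fixes f :: "'a::euclidean_space \<Rightarrow> ennreal"
  assumes [measurable]: "f \<in> borel_measurable borel" and J: "insert j J \<subseteq> Basis" "j \<notin> J"
  shows "marginal f (insert j J) x = (\<integral>\<^sup>+t. marginal f J (x + (t - x \<bullet> j) *\<^sub>R j) \<partial>lborel)"
proof -
  interpret product_sigma_finite "\<lambda>_::'a. lborel" by standard
  have "finite J" using finite_subset[OF J(1) finite_Basis] by simp
  have "(x + (t - x \<bullet> j) *\<^sub>R j) + (\<Sum>b\<in>J. (z b - (x + (t - x \<bullet> j) *\<^sub>R j) \<bullet> b) *\<^sub>R b)
      = x + (\<Sum>b\<in>insert j J. ((z(j := t)) b - x \<bullet> b) *\<^sub>R b)" for z t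
  proof -
    have "(x + (t - x \<bullet> j) *\<^sub>R j) \<bullet> b = x \<bullet> b" if "b \<in> J" for b
    proof -
      have "j \<bullet> b = 0" using J that by (intro inner_not_same_Basis) auto
      then show ?thesis by (simp add: inner_add_left)
    qed
    then have "(\<Sum>b\<in>J. (z b - (x + (t - x \<bullet> j) *\<^sub>R j) \<bullet> b) *\<^sub>R b) = (\<Sum>b\<in>J. ((z(j := t)) b - x \<bullet> b) *\<^sub>R b)"
      using J(2) by (intro sum.cong) auto
    then show ?thesis using J \<open>finite J\<close> by (simp add: algebra_simps)
  qed
  then show ?thesis
    unfolding marginal_def using J \<open>finite J\<close>
    by (subst product_nn_integral_insert_rev) (simp_all add: add.assoc, measurable)
qed

lemma nn_integral_lborel_eq_marginal:
  fixes f :: "'a::euclidean_space \<Rightarrow> ennreal"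
  assumes [measurable]: "f \<in> borel_measurable borel"
  shows "(\<integral>\<^sup>+x. f x \<partial>lborel) = marginal f Basis x"
proof -
  have "x + (\<Sum>b\<in>Basis. (z b - x \<bullet> b) *\<^sub>R b) = (\<Sum>b\<in>Basis. z b *\<^sub>R b)" for z
    by (simp add: scaleR_diff_left sum_subtractf euclidean_representation)
  then show ?thesis
    unfolding marginal_def by (subst lborel_eq) (simp add: nn_integral_distr)
qed

theorem log_concave_marginal:
  fixes f :: "'a::euclidean_space \<Rightarrow> ennreal"
  assumes [measurable]: "f \<in> borel_measurable borel" and lc: "log_concave_ennreal f"
  shows "J \<subseteq> Basis \<Longrightarrow> log_concave_ennreal (marginal f J)"
proof (induction J rule: infinite_finite_induct)
  case (infinite J)
  then show ?case using finite_subset[OF _ finite_Basis] by blast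
next
  case empty
  then show ?case using lc by (simp add: marginal_empty)
next
  case (insert j J)
  then have IH: "log_concave_ennreal (marginal f J)" by simp
  \<comment> \<open>\<open>F z\<close> is \<open>marginal f J\<close> on the line through \<open>z\<close> in direction \<open>j\<close>, parametrised by the
    \<open>j\<close>-th coordinate; Prekopa-Leindler along these lines is the induction step.\<close>
  define F where "F z t = marginal f J (z + (t - z \<bullet> j) *\<^sub>R j)" for z t
  have "quasiconcave (F z)" for z
  proof -
    have "F z = (\<lambda>t. marginal f J ((z - (z \<bullet> j) *\<^sub>R j) + t *\<^sub>R j))"
      by (simp add: F_def fun_eq_iff algebra_simps)
    then show ?thesis
      using IH by (simp add: quasiconcave_if_log_concave_ennreal log_concave_ennreal_line)
  qed
  show ?case
    unfolding log_concave_ennreal_def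
  proof (intro allI impI)
    fix x y and l u v :: real
    assume l: "0 < l" "l < 1" and uv: "0 \<le> u" "0 \<le> v"
      and u: "ennreal u \<le> marginal f (insert j J) x" and v: "ennreal v \<le> marginal f (insert j J) y"
    define m where "m = (1 - l) *\<^sub>R x + l *\<^sub>R y"
    have "ennreal (u powr (1 - l) * v powr l) \<le> (\<integral>\<^sup>+t. F m t \<partial>lborel)"
    proof (rule prekopa_leindler_real[OF l \<open>quasiconcave (F x)\<close> \<open>quasiconcave (F y)\<close> \<open>quasiconcave (F m)\<close>])
      fix a b u' v' :: real
      assume "0 \<le> u'" "0 \<le> v'" "ennreal u' \<le> F x a" "ennreal v' \<le> F y b"
      then have "ennreal (u' powr (1 - l) * v' powr l)
          \<le> marginal f J ((1 - l) *\<^sub>R (x + (a - x \<bullet> j) *\<^sub>R j) + l *\<^sub>R (y + (b - y \<bullet> j) *\<^sub>R j))"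
        using l unfolding F_def by (blast intro: log_concave_ennrealD[OF IH])
      also have "(1 - l) *\<^sub>R (x + (a - x \<bullet> j) *\<^sub>R j) + l *\<^sub>R (y + (b - y \<bullet> j) *\<^sub>R j)
          = m + ((1 - l) * a + l * b - m \<bullet> j) *\<^sub>R j"
        by (simp add: m_def inner_add_left algebra_simps)
      finally show "ennreal (u' powr (1 - l) * v' powr l) \<le> F m ((1 - l) * a + l * b)"
        by (simp add: F_def)
    qed (use uv u v insert in \<open>simp_all add: F_def marginal_insert\<close>)
    then show "ennreal (u powr (1 - l) * v powr l) \<le> marginal f (insert j J) m"
      using insert by (simp add: F_def marginal_insert)
  qed
qed

lemma marginal_scaleR_Basis:
  fixes f :: "'a::euclidean_space \<Rightarrow> ennreal"
  assumes "J \<subseteq> Basis" "b \<in> Basis" "b \<notin> J"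
  shows "marginal f J (t *\<^sub>R b) = (\<integral>\<^sup>+z. f (t *\<^sub>R b + (\<Sum>b'\<in>J. z b' *\<^sub>R b')) \<partial>(\<Pi>\<^sub>M b'\<in>J. lborel))"
proof -
  have "b \<bullet> b' = 0" if "b' \<in> J" for b'
  proof -
    have "b' \<in> Basis" "b \<noteq> b'" using assms that by auto
    then show ?thesis using assms(2) by (simp add: inner_not_same_Basis)
  qed
  then show ?thesis unfolding marginal_def by (simp cong: sum.cong)
qed

lemma nn_integral_lborel_fibres:
  fixes f :: "'a::euclidean_space \<Rightarrow> ennreal"
  assumes [measurable]: "f \<in> borel_measurable borel" and b: "b \<in> Basis"
  shows "(\<integral>\<^sup>+x. f x \<partial>lborel)
    = (\<integral>\<^sup>+z. (\<integral>\<^sup>+t. f (t *\<^sub>R b + (\<Sum>b'\<in>Basis - {b}. z b' *\<^sub>R b')) \<partial>lborel) \<partial>(\<Pi>\<^sub>M b'\<in>Basis - {b}. lborel))"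
proof -
  interpret product_sigma_finite "\<lambda>_::'a. lborel" by standard
  have "(\<Sum>b'\<in>insert b (Basis - {b}). (z(b := t)) b' *\<^sub>R b') = t *\<^sub>R b + (\<Sum>b'\<in>Basis - {b}. z b' *\<^sub>R b')" for z t
    by (simp add: sum.insert_remove)
  then have "marginal f (insert b (Basis - {b})) 0
      = (\<integral>\<^sup>+z. (\<integral>\<^sup>+t. f (t *\<^sub>R b + (\<Sum>b'\<in>Basis - {b}. z b' *\<^sub>R b')) \<partial>lborel) \<partial>(\<Pi>\<^sub>M b'\<in>Basis - {b}. lborel))"
    unfolding marginal_def by (subst product_nn_integral_insert) (simp_all, measurable)
  then show ?thesis using b by (simp add: nn_integral_lborel_eq_marginal[of f 0] insert_absorb)
qed

lemma nn_integral_coordinate_marginal: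
  fixes f :: "'a::euclidean_space \<Rightarrow> ennreal" and g :: "real \<Rightarrow> ennreal"
  assumes [measurable]: "f \<in> borel_measurable borel" "g \<in> borel_measurable borel" and b: "b \<in> Basis"
  shows "(\<integral>\<^sup>+t. g t * marginal f (Basis - {b}) (t *\<^sub>R b) \<partial>lborel) = (\<integral>\<^sup>+x. g (x \<bullet> b) * f x \<partial>lborel)"
proof -
  have B: "insert b (Basis - {b}) = Basis" using b by auto
  have "marginal (\<lambda>x. g (x \<bullet> b) * f x) (Basis - {b}) (t *\<^sub>R b) = g t * marginal f (Basis - {b}) (t *\<^sub>R b)" for t
  proof -
    have "(t *\<^sub>R b + (\<Sum>b'\<in>Basis - {b}. z b' *\<^sub>R b')) \<bullet> b = t" for z
      using b by (simp add: inner_add_left inner_sum_left inner_not_same_Basis)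
    then show ?thesis using b
      by (simp add: marginal_scaleR_Basis nn_integral_cmult)
  qed
  moreover have "(\<lambda>x. g (x \<bullet> b) * f x) \<in> borel_measurable borel" by measurable
  ultimately have "(\<integral>\<^sup>+t. g t * marginal f (Basis - {b}) (t *\<^sub>R b) \<partial>lborel)
      = marginal (\<lambda>x. g (x \<bullet> b) * f x) (insert b (Basis - {b})) 0"
    using b by (subst marginal_insert) auto
  also have "\<dots> = (\<integral>\<^sup>+x. g (x \<bullet> b) * f x \<partial>lborel)"
    unfolding B by (rule nn_integral_lborel_eq_marginal[symmetric]) measurable
  finally show ?thesis .
qed

section \<open>Even log-concave densities on the line\<close>

lemma log_concave_ennreal_top_segment:
  assumes "log_concave_ennreal F" "F x = \<top>" "0 < F y" "0 < l" "l < 1"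
  shows "F ((1 - l) *\<^sub>R x + l *\<^sub>R y) = \<top>"
proof (rule ennreal_eq_top_if_unbounded)
  fix N :: real assume N: "0 \<le> N"
  have "ennreal 0 < F y" using assms(3) by simp
  then obtain v where v: "0 < v" "ennreal v \<le> F y" by (rule ennreal_less_imp_real_between)
  define u where "u = (N / v powr l) powr (1 / (1 - l))"
  have "u powr (1 - l) * v powr l = N"
    using assms(4,5) N v by (simp add: u_def powr_powr)
  moreover have "ennreal (u powr (1 - l) * v powr l) \<le> F ((1 - l) *\<^sub>R x + l *\<^sub>R y)"
    using assms v by (intro log_concave_ennrealD) (auto simp: u_def)
  ultimately show "ennreal N \<le> F ((1 - l) *\<^sub>R x + l *\<^sub>R y)" by simp
qed

lemma log_concave_ennreal_real_finite:
  fixes m :: "real \<Rightarrow> ennreal"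
  assumes lc: "log_concave_ennreal m" and int: "0 < (\<integral>\<^sup>+t. m t \<partial>lborel)" "(\<integral>\<^sup>+t. m t \<partial>lborel) < \<top>"
  shows "m t0 < \<top>"
proof (rule ccontr)
  assume "\<not> m t0 < \<top>"
  then have top: "m t0 = \<top>" using top.not_eq_extremum by blast
  have "\<exists>s. s \<noteq> t0 \<and> 0 < m s"
  proof (rule ccontr)
    assume "\<nexists>s. s \<noteq> t0 \<and> 0 < m s"
    then have "AE t in lborel. m t = 0"
      using AE_lborel_singleton[of t0] by (auto elim!: eventually_mono)
    then show False using int(1) by (simp add: nn_integral_cong_AE)
  qed
  then obtain s where s: "s \<noteq> t0" "0 < m s" by blast
  have seg: "m p = \<top>" if p: "p \<in> open_segment t0 s" for p
  proof -
    obtain l where "0 < l" "l < 1" "p = (1 - l) *\<^sub>R t0 + l *\<^sub>R s"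
      using p unfolding in_segment(2) by blast
    then show ?thesis using log_concave_ennreal_top_segment[OF lc top s(2)] by simp
  qed
  have "open_segment t0 s \<in> sets lborel" "emeasure lborel (open_segment t0 s) \<noteq> 0"
    using s(1) by (auto simp: open_segment_eq_real_ivl)
  then have "\<top> = (\<integral>\<^sup>+t. \<top> * indicator (open_segment t0 s) t \<partial>lborel)"
    by (subst nn_integral_cmult_indicator) (auto simp: ennreal_top_mult)
  also have "\<dots> \<le> (\<integral>\<^sup>+t. m t \<partial>lborel)"
    using seg by (intro nn_integral_mono) (auto split: split_indicator)
  finally show False using int(2) by (simp add: top_unique)
qed

lemma nn_integral_even:
  fixes h :: "real \<Rightarrow> ennreal"
  assumes [measurable]: "h \<in> borel_measurable borel"
  shows "(\<integral>\<^sup>+t. h \<bar>t\<bar> \<partial>lborel) = 2 * (\<integral>\<^sup>+t. h t * indicator {0..} t \<partial>lborel)"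
proof -
  have "(\<integral>\<^sup>+t. h \<bar>t\<bar> \<partial>lborel) = (\<integral>\<^sup>+t. h t * indicator {0..} t + h \<bar>t\<bar> * indicator {..<0} t \<partial>lborel)"
    by (intro nn_integral_cong) (auto split: split_indicator)
  also have "\<dots> = (\<integral>\<^sup>+t. h t * indicator {0..} t \<partial>lborel) + (\<integral>\<^sup>+t. h \<bar>t\<bar> * indicator {..<0} t \<partial>lborel)"
    by (rule nn_integral_add) measurable
  also have "(\<integral>\<^sup>+t. h \<bar>t\<bar> * indicator {..<0} t \<partial>lborel) = (\<integral>\<^sup>+t. h \<bar>- t\<bar> * indicator {..<0} (- t) \<partial>lborel)"
    by (subst lborel_distr_uminus[symmetric]) (simp add: nn_integral_distr)
  also have "\<dots> = (\<integral>\<^sup>+t. h t * indicator {0..} t \<partial>lborel)"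
    using AE_lborel_singleton[of 0]
    by (intro nn_integral_cong_AE) (auto elim!: eventually_mono split: split_indicator)
  finally show ?thesis by (simp add: mult_2)
qed

lemma nn_integral_abs_power_exp:
  fixes a :: real
  assumes a: "0 < a"
  shows "(\<integral>\<^sup>+t. ennreal (\<bar>t\<bar> ^ k * exp (- a * \<bar>t\<bar>)) \<partial>lborel) = ennreal (2 * fact k / a ^ (k + 1))"
proof -
  define I where "I = (\<integral>\<^sup>+t. ennreal (t ^ k * exp (- a * t)) * indicator {0..} t \<partial>lborel)"
  have "ennreal a * I = (\<integral>\<^sup>+t. ennreal (erlang_density 0 a t * t ^ k) \<partial>lborel)"
    unfolding I_def using a
    by (subst nn_integral_cmult[symmetric])
      (auto intro!: nn_integral_cong simp: erlang_density_def ennreal_mult'[symmetric] split: split_indicator)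
  also have "\<dots> = ennreal a * ennreal (fact k / a ^ (k + 1))"
    using a by (simp add: nn_integral_erlang_ith_moment ennreal_mult'[symmetric])
  finally have "I = ennreal (fact k / a ^ (k + 1))"
    using a by (simp add: mult.commute[of "ennreal a"] mult_right_ennreal_cancel)
  moreover have "(\<integral>\<^sup>+t. ennreal (\<bar>t\<bar> ^ k * exp (- a * \<bar>t\<bar>)) \<partial>lborel) = 2 * I"
    unfolding I_def by (rule nn_integral_even[where h = "\<lambda>s. ennreal (s ^ k * exp (- a * s))"]) measurable
  moreover have "2 * ennreal (fact k / a ^ (k + 1)) = ennreal (2 * (fact k / a ^ (k + 1)))"
    using a by (subst ennreal_mult) auto
  ultimately show ?thesis by simp
qed

lemma nn_integral_abs_power_mult_exp:
  fixes a c :: real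
  assumes a: "0 < a" and c: "0 \<le> c"
  shows "(\<integral>\<^sup>+t. ennreal (\<bar>t\<bar> ^ k * (c * exp (- a * \<bar>t\<bar>))) \<partial>lborel) = ennreal (c * (2 * fact k / a ^ (k + 1)))"
proof -
  have "(\<integral>\<^sup>+t. ennreal (\<bar>t\<bar> ^ k * (c * exp (- a * \<bar>t\<bar>))) \<partial>lborel)
      = (\<integral>\<^sup>+t. ennreal c * ennreal (\<bar>t\<bar> ^ k * exp (- a * \<bar>t\<bar>)) \<partial>lborel)"
    using c by (intro nn_integral_cong) (simp add: ennreal_mult' mult.left_commute)
  also have "\<dots> = ennreal c * (\<integral>\<^sup>+t. ennreal (\<bar>t\<bar> ^ k * exp (- a * \<bar>t\<bar>)) \<partial>lborel)"
    by (rule nn_integral_cmult) measurable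
  also have "\<dots> = ennreal c * ennreal (2 * fact k / a ^ (k + 1))"
    by (simp only: nn_integral_abs_power_exp[OF a])
  also have "\<dots> = ennreal (c * (2 * fact k / a ^ (k + 1)))"
    using a c by (intro ennreal_mult[symmetric]) auto
  finally show ?thesis .
qed

lemma log_concave_fun_of_ennreal:
  assumes "log_concave_ennreal (\<lambda>x. ennreal (g x))" "\<And>x. 0 \<le> g x"
  shows "log_concave_fun g"
  unfolding log_concave_fun_def
proof (intro conjI allI impI)
  fix x y and l :: real assume "0 < l \<and> l < 1"
  then have "ennreal (g x powr (1 - l) * g y powr l) \<le> ennreal (g ((1 - l) *\<^sub>R x + l *\<^sub>R y))"
    using assms by (intro log_concave_ennrealD) auto
  then show "g x powr (1 - l) * g y powr l \<le> g ((1 - l) *\<^sub>R x + l *\<^sub>R y)"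
    using assms(2) by (simp add: ennreal_le_iff)
qed (use assms in auto)

lemma log_concave_fun_crosses_exponential_once:
  fixes g :: "real \<Rightarrow> real"
  assumes lc: "log_concave_fun g" and g0: "0 < g 0" and t1: "0 \<le> t1" "t1 < s"
    and below: "g t1 < g 0 * exp (- a * t1)"
  shows "g s \<le> g 0 * exp (- a * s)"
proof (rule ccontr)
  assume "\<not> ?thesis"
  then have above: "g 0 * exp (- a * s) < g s" by simp
  have "t1 \<noteq> 0" using below by auto
  with t1 have s: "0 < s" and l: "0 < t1 / s" "t1 / s < 1" by auto
  have "exp (- a * s) powr (t1 / s) = exp (- a * t1)"
    using s by (simp add: powr_def)
  then have "g 0 * exp (- a * t1) = (g 0 powr (1 - t1 / s) * g 0 powr (t1 / s)) * exp (- a * s) powr (t1 / s)"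
    using g0 by (simp add: powr_one_minus_mult_powr_self)
  also have "\<dots> = g 0 powr (1 - t1 / s) * (g 0 * exp (- a * s)) powr (t1 / s)"
    using g0 by (simp add: powr_mult)
  also have "\<dots> < g 0 powr (1 - t1 / s) * g s powr (t1 / s)"
    using g0 l above by (intro mult_strict_left_mono powr_less_mono2) auto
  also have "\<dots> \<le> g ((1 - t1 / s) *\<^sub>R 0 + (t1 / s) *\<^sub>R s)"
    using lc l unfolding log_concave_fun_def by blast
  also have "(1 - t1 / s) *\<^sub>R 0 + (t1 / s) *\<^sub>R s = t1" using s by simp
  finally show False using below by simp
qed

lemma nn_integral_second_moment_le_if_crossing:
  fixes g h :: "real \<Rightarrow> real"
  assumes [measurable]: "g \<in> borel_measurable borel" "h \<in> borel_measurable borel"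
    and nonneg: "\<And>t. 0 \<le> g t" "\<And>t. 0 \<le> h t"
    and int: "(\<integral>\<^sup>+t. g t \<partial>lborel) = (\<integral>\<^sup>+t. h t \<partial>lborel)" "(\<integral>\<^sup>+t. h t \<partial>lborel) < \<top>"
    and cross: "AE t in lborel. (t\<^sup>2 - c\<^sup>2) * (g t - h t) \<le> 0"
  shows "(\<integral>\<^sup>+t. ennreal (t\<^sup>2 * g t) \<partial>lborel) \<le> (\<integral>\<^sup>+t. ennreal (t\<^sup>2 * h t) \<partial>lborel)"
proof -
  have split: "(\<integral>\<^sup>+t. ennreal (t\<^sup>2 * p t + c\<^sup>2 * q t) \<partial>lborel)
      = (\<integral>\<^sup>+t. ennreal (t\<^sup>2 * p t) \<partial>lborel) + ennreal (c\<^sup>2) * (\<integral>\<^sup>+t. q t \<partial>lborel)"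
    if [measurable]: "p \<in> borel_measurable borel" "q \<in> borel_measurable borel"
      and "\<And>t. 0 \<le> p t" "\<And>t. 0 \<le> q t" for p q :: "real \<Rightarrow> real"
  proof -
    have "(\<integral>\<^sup>+t. ennreal (t\<^sup>2 * p t + c\<^sup>2 * q t) \<partial>lborel)
        = (\<integral>\<^sup>+t. ennreal (t\<^sup>2 * p t) + ennreal (c\<^sup>2) * ennreal (q t) \<partial>lborel)"
      using that(3,4) by (intro nn_integral_cong) (simp add: ennreal_plus ennreal_mult)
    also have "\<dots> = (\<integral>\<^sup>+t. ennreal (t\<^sup>2 * p t) \<partial>lborel) + (\<integral>\<^sup>+t. ennreal (c\<^sup>2) * ennreal (q t) \<partial>lborel)"
      by (rule nn_integral_add) measurable
    also have "(\<integral>\<^sup>+t. ennreal (c\<^sup>2) * ennreal (q t) \<partial>lborel) = ennreal (c\<^sup>2) * (\<integral>\<^sup>+t. q t \<partial>lborel)"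
      by (rule nn_integral_cmult) measurable
    finally show ?thesis .
  qed
  have "(\<integral>\<^sup>+t. ennreal (t\<^sup>2 * g t) \<partial>lborel) + ennreal (c\<^sup>2) * (\<integral>\<^sup>+t. h t \<partial>lborel)
      = (\<integral>\<^sup>+t. ennreal (t\<^sup>2 * g t + c\<^sup>2 * h t) \<partial>lborel)"
    by (rule split[OF assms(1,2) nonneg, symmetric])
  also have "\<dots> \<le> (\<integral>\<^sup>+t. ennreal (t\<^sup>2 * h t + c\<^sup>2 * g t) \<partial>lborel)"
    using cross by (intro nn_integral_mono_AE) (auto elim!: eventually_mono intro!: ennreal_leI simp: algebra_simps)
  also have "\<dots> = (\<integral>\<^sup>+t. ennreal (t\<^sup>2 * h t) \<partial>lborel) + ennreal (c\<^sup>2) * (\<integral>\<^sup>+t. h t \<partial>lborel)"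
    unfolding split[OF assms(2,1) nonneg(2,1)] int(1) ..
  moreover have "ennreal (c\<^sup>2) * (\<integral>\<^sup>+t. h t \<partial>lborel) \<noteq> \<top>"
    using int(2) by (simp add: ennreal_mult_eq_top_iff)
  ultimately show ?thesis by (simp add: ennreal_add_left_cancel_le add.commute)
qed

lemma AE_eq_if_le_and_nn_integral_eq:
  fixes g h :: "'a \<Rightarrow> real"
  assumes [measurable]: "g \<in> borel_measurable M" "h \<in> borel_measurable M"
    and le: "\<And>x. h x \<le> g x" and nonneg: "\<And>x. 0 \<le> h x"
    and int: "(\<integral>\<^sup>+x. g x \<partial>M) = (\<integral>\<^sup>+x. h x \<partial>M)" "(\<integral>\<^sup>+x. h x \<partial>M) < \<top>"
  shows "AE x in M. g x = h x"
proof -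
  have "(\<integral>\<^sup>+x. h x \<partial>M) + (\<integral>\<^sup>+x. ennreal (g x - h x) \<partial>M) = (\<integral>\<^sup>+x. h x + ennreal (g x - h x) \<partial>M)"
    by (rule nn_integral_add[symmetric]) measurable
  also have "\<dots> = (\<integral>\<^sup>+x. h x \<partial>M) + 0"
    using le nonneg int(1) by (simp flip: ennreal_plus)
  finally have "(\<integral>\<^sup>+x. ennreal (g x - h x) \<partial>M) = 0"
    using int(2) by (auto simp only: ennreal_add_left_cancel infinity_ennreal_def)
  then have "AE x in M. ennreal (g x - h x) = 0"
    by (subst (asm) nn_integral_0_iff_AE) measurable
  then show ?thesis using le by (auto elim!: eventually_mono simp: ennreal_eq_0_iff intro: antisym)
qed

text \<open>\<open>h\<close> is the two-sided exponential with the same peak as \<open>g\<close>; by log-concavity \<open>g - h\<close>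
  changes sign at most once on \<open>[0, \<infinity>)\<close>, from nonnegative to nonpositive.\<close>

lemma even_log_concave_crosses_exponential:
  fixes g h :: "real \<Rightarrow> real"
  assumes lc: "log_concave_fun g" and even: "\<And>t. g (- t) = g t" and g0: "0 < g 0"
    and h: "\<And>t. h t = g 0 * exp (- a * \<bar>t\<bar>)"
    and [measurable]: "g \<in> borel_measurable borel"
    and int: "(\<integral>\<^sup>+t. g t \<partial>lborel) = (\<integral>\<^sup>+t. h t \<partial>lborel)" "(\<integral>\<^sup>+t. h t \<partial>lborel) < \<top>"
  obtains c where "AE t in lborel. (t\<^sup>2 - c\<^sup>2) * (g t - h t) \<le> 0"
proof -
  have abs_eq: "g \<bar>t\<bar> = g t" "h \<bar>t\<bar> = h t" for t
    using even[of t] h by (cases "0 \<le> t"; simp)+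
  define P where "P = {t. 0 \<le> t \<and> g t < h t}"
  show ?thesis
  proof (cases "P = {}")
    case True
    have "h t \<le> g t" for t
      using True abs_eq[of t] unfolding P_def by (metis (mono_tags) abs_ge_zero empty_iff mem_Collect_eq not_le)
    moreover have "0 \<le> h t" for t using g0 by (simp add: h)
    moreover have "h \<in> borel_measurable borel" unfolding h[abs_def] by measurable
    ultimately have "AE t in lborel. g t = h t"
      using int by (intro AE_eq_if_le_and_nn_integral_eq) auto
    then show ?thesis by (rule that[OF eventually_mono]) simp
  next
    case False
    define c where "c = Inf P"
    have bdd: "bdd_below P" unfolding P_def by (auto intro: bdd_belowI[of _ 0])
    have c0: "0 \<le> c" unfolding c_def using False by (intro cInf_greatest) (auto simp: P_def)
    have "(s\<^sup>2 - c\<^sup>2) * (g s - h s) \<le> 0" if s: "0 \<le> s" for s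
    proof (cases s c rule: linorder_cases)
      case less
      then have "s \<notin> P" using cInf_lower[OF _ bdd, of s] unfolding c_def by auto
      then have "h s \<le> g s" using s unfolding P_def by auto
      moreover have "s\<^sup>2 \<le> c\<^sup>2" using less s by (intro power_mono) auto
      ultimately show ?thesis by (intro mult_nonpos_nonneg) auto
    next
      case greater
      then obtain t1 where t1: "t1 \<in> P" "t1 < s" using cInf_less_iff[OF False bdd] unfolding c_def by auto
      then have "g s \<le> h s"
        using log_concave_fun_crosses_exponential_once[OF lc g0, of t1 s a] s h unfolding P_def by auto
      moreover have "c\<^sup>2 \<le> s\<^sup>2" using greater c0 by (intro power_mono) auto
      ultimately show ?thesis by (intro mult_nonneg_nonpos) auto
    qed simp
    then have "(t\<^sup>2 - c\<^sup>2) * (g t - h t) \<le> 0" for t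
      using abs_eq[of t] by (metis abs_ge_zero power2_abs)
    then show ?thesis by (intro that AE_I2)
  qed
qed

theorem even_log_concave_density_at_zero_le:
  fixes m :: "real \<Rightarrow> ennreal"
  assumes lc: "log_concave_ennreal m" and even: "\<And>t. m (- t) = m t"
    and int1: "(\<integral>\<^sup>+t. m t \<partial>lborel) = 1" and int2: "(\<integral>\<^sup>+t. ennreal (t\<^sup>2) * m t \<partial>lborel) = 1"
  shows "m 0 \<le> ennreal (1 / sqrt 2)"
proof -
  define g where "g t = enn2real (m t)" for t
  have m_g: "m = (\<lambda>t. ennreal (g t))"
    using log_concave_ennreal_real_finite[OF lc] int1 by (simp add: fun_eq_iff g_def less_top)
  have g_nonneg: "0 \<le> g t" for t by (simp add: g_def)
  have g_even: "g (- t) = g t" for t using even by (simp add: g_def)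
  have [measurable]: "g \<in> borel_measurable borel"
    using borel_measurable_quasiconcave[OF quasiconcave_if_log_concave_ennreal[OF lc]]
    unfolding g_def by measurable
  have lcg: "log_concave_fun g" using lc g_nonneg by (simp add: m_g log_concave_fun_of_ennreal)
  have g_le: "g t \<le> g 0" for t
    using log_concave_ennreal_symmetric_le[OF lc, of 0 t] even[of t] g_nonneg by (simp add: m_g)
  define g0 where "g0 = g 0"
  have g0: "0 < g0"
  proof (rule ccontr)
    assume "\<not> 0 < g0"
    then have "g t = 0" for t using g_le[of t] g_nonneg[of t] by (simp add: g0_def)
    then have "m = (\<lambda>_. 0)" by (simp add: m_g)
    then show False using int1 by simp
  qed
  define a where "a = 2 * g0"
  have a: "0 < a" using g0 by (simp add: a_def)
  define h where "h t = g0 * exp (- a * \<bar>t\<bar>)" for t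
  have moment: "(\<integral>\<^sup>+t. ennreal (\<bar>t\<bar> ^ k * h t) \<partial>lborel) = ennreal (g0 * (2 * fact k / a ^ (k + 1)))" for k
    unfolding h_def using nn_integral_abs_power_mult_exp[OF a, of g0 k] g0 by simp
  have h_int: "(\<integral>\<^sup>+t. h t \<partial>lborel) = 1"
    using moment[of 0] g0 by (simp add: a_def)
  have h_moment: "(\<integral>\<^sup>+t. ennreal (t\<^sup>2 * h t) \<partial>lborel) = ennreal (1 / (2 * g0\<^sup>2))"
    using moment[of 2] g0 by (simp add: a_def power2_eq_square power3_eq_cube)
  obtain c where "AE t in lborel. (t\<^sup>2 - c\<^sup>2) * (g t - h t) \<le> 0"
    using g_even lcg g0 int1 h_int
    by (elim even_log_concave_crosses_exponential[where h = h and a = a])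
      (auto simp: m_g h_def g0_def)
  then have "(\<integral>\<^sup>+t. ennreal (t\<^sup>2 * g t) \<partial>lborel) \<le> (\<integral>\<^sup>+t. ennreal (t\<^sup>2 * h t) \<partial>lborel)"
    using g_nonneg g0 int1 h_int
    by (intro nn_integral_second_moment_le_if_crossing) (auto simp: m_g h_def)
  then have "1 \<le> 1 / (2 * g0\<^sup>2)"
    using int2 h_moment g0 by (simp add: m_g ennreal_mult' ennreal_le_iff2 flip: ennreal_1)
  then have "g0\<^sup>2 \<le> 1 / 2" using g0 by (simp add: field_simps)
  then have "g0 \<le> sqrt (1 / 2)" by (rule real_le_rsqrt)
  then have "g0 \<le> 1 / sqrt 2" by (simp add: real_sqrt_divide)
  then show ?thesis by (simp add: m_g g0_def ennreal_leI)
qed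

section \<open>Thickening convex sets along coordinate directions\<close>

definition thicken :: "'a::real_vector set \<Rightarrow> 'a \<Rightarrow> real \<Rightarrow> 'a set" where
  "thicken C v d = {c + s *\<^sub>R v | c s. c \<in> C \<and> \<bar>s\<bar> \<le> d}"

lemma thicken_eq_sums: "thicken C v d = (\<Union>c\<in>C. \<Union>y\<in>(\<lambda>s. s *\<^sub>R v) ` {-d..d}. {c + y})"
proof (intro set_eqI iffI)
  fix x assume "x \<in> thicken C v d"
  then obtain c s where "x = c + s *\<^sub>R v" "c \<in> C" "s \<in> {-d..d}" unfolding thicken_def by (auto simp: abs_le_iff)
  then show "x \<in> (\<Union>c\<in>C. \<Union>y\<in>(\<lambda>s. s *\<^sub>R v) ` {-d..d}. {c + y})" by blast
next
  fix x assume "x \<in> (\<Union>c\<in>C. \<Union>y\<in>(\<lambda>s. s *\<^sub>R v) ` {-d..d}. {c + y})"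
  then obtain c s where "x = c + s *\<^sub>R v" "c \<in> C" "\<bar>s\<bar> \<le> d" by auto
  then show "x \<in> thicken C v d" unfolding thicken_def by blast
qed

lemma closed_thicken:
  fixes C :: "'a::real_normed_vector set"
  shows "closed C \<Longrightarrow> closed (thicken C v d)"
  unfolding thicken_eq_sums
  by (intro closed_compact_sums compact_continuous_image continuous_intros) auto

lemma convex_thicken: "convex C \<Longrightarrow> convex (thicken C v d)"
  unfolding thicken_eq_sums
  by (intro convex_sums convex_linear_image) (auto intro: linear_scaleR_left)

lemma convex_line_fibre:
  assumes "convex C"
  shows "convex {t::real. a + t *\<^sub>R v \<in> C}"
proof (rule convexI)
  fix s t u w :: real
  assume "s \<in> {t. a + t *\<^sub>R v \<in> C}" "t \<in> {t. a + t *\<^sub>R v \<in> C}" "0 \<le> u" "0 \<le> w" "u + w = 1"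
  then have "u *\<^sub>R (a + s *\<^sub>R v) + w *\<^sub>R (a + t *\<^sub>R v) \<in> C" using assms by (simp add: convex_def)
  moreover have "u *\<^sub>R (a + s *\<^sub>R v) + w *\<^sub>R (a + t *\<^sub>R v) = a + (u *\<^sub>R s + w *\<^sub>R t) *\<^sub>R v"
    using \<open>u + w = 1\<close> by (simp add: algebra_simps flip: scaleR_add_left)
  ultimately show "u *\<^sub>R s + w *\<^sub>R t \<in> {t. a + t *\<^sub>R v \<in> C}" by simp
qed

lemma thicken_real_diff_subset:
  fixes J :: "real set"
  assumes "convex J"
  shows "thicken J 1 d - J \<subseteq> {Sup J .. Sup J + d} \<union> {Inf J - d .. Inf J}"
proof
  fix t assume "t \<in> thicken J 1 d - J"
  then obtain j s where t: "t = j + s" "j \<in> J" "\<bar>s\<bar> \<le> d" "t \<notin> J" unfolding thicken_def by auto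
  show "t \<in> {Sup J .. Sup J + d} \<union> {Inf J - d .. Inf J}"
  proof (cases "j < t")
    case True
    have up: "x \<le> t" if "x \<in> J" for x
    proof (rule ccontr)
      assume "\<not> x \<le> t"
      then have "t \<in> {j..x}" using True by auto
      then show False using convex_real_atLeastAtMost_subset[OF assms t(2) that] t(4) by blast
    qed
    then have "bdd_above J" by (auto simp: bdd_above_def)
    then have "j \<le> Sup J" "Sup J \<le> t" using t(2) up by (auto intro: cSup_upper cSup_least)
    then show ?thesis using t by auto
  next
    case False
    have low: "t \<le> x" if "x \<in> J" for x
    proof (rule ccontr)
      assume "\<not> t \<le> x"
      then have "t \<in> {x..j}" using False by auto
      then show False using convex_real_atLeastAtMost_subset[OF assms that t(2)] t(4) by blast
    qed
    then have "bdd_below J" by (auto simp: bdd_below_def)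
    then have "Inf J \<le> j" "t \<le> Inf J" using t(2) low by (auto intro: cInf_lower cInf_greatest)
    then show ?thesis using t by auto
  qed
qed

lemma emeasure_thicken_real_diff_le:
  fixes J :: "real set"
  assumes "convex J" "0 \<le> d"
  shows "emeasure lborel (thicken J 1 d - J) \<le> ennreal (2 * d)"
proof -
  have "emeasure lborel (thicken J 1 d - J) \<le> emeasure lborel ({Sup J .. Sup J + d} \<union> {Inf J - d .. Inf J})"
    using thicken_real_diff_subset[OF assms(1)] by (intro emeasure_mono) auto
  also have "\<dots> \<le> emeasure lborel {Sup J .. Sup J + d} + emeasure lborel {Inf J - d .. Inf J}"
    by (rule emeasure_subadditive) auto
  also have "\<dots> = ennreal (2 * d)" using assms(2) by (simp flip: ennreal_plus)
  finally show ?thesis .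
qed

lemma emeasure_line_thicken_diff_le:
  assumes C: "convex C" and d: "0 \<le> d"
  shows "emeasure lborel {t. p + t *\<^sub>R v \<in> thicken C v d - C} \<le> ennreal (2 * d)"
proof -
  define J where "J = {t. p + t *\<^sub>R v \<in> C}"
  have "convex J" unfolding J_def by (rule convex_line_fibre[OF C])
  have "{t. p + t *\<^sub>R v \<in> thicken C v d - C} \<subseteq> thicken J 1 d - J"
  proof
    fix t assume "t \<in> {t. p + t *\<^sub>R v \<in> thicken C v d - C}"
    then obtain c s where cs: "p + t *\<^sub>R v = c + s *\<^sub>R v" "c \<in> C" "\<bar>s\<bar> \<le> d" "p + t *\<^sub>R v \<notin> C"
      unfolding thicken_def by auto
    then have "c = p + (t - s) *\<^sub>R v" by (simp add: algebra_simps)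
    then have "t - s \<in> J" using cs(2) by (simp add: J_def)
    moreover have "t \<notin> J" using cs(4) by (simp add: J_def)
    moreover have "t \<in> thicken J 1 d"
      unfolding thicken_def using \<open>t - s \<in> J\<close> cs(3)
      by (intro CollectI exI[of _ "t - s"] exI[of _ s]) simp
    ultimately show "t \<in> thicken J 1 d - J" by simp
  qed
  moreover have "thicken J 1 d - J \<in> sets borel"
    using \<open>convex J\<close> by (intro sets.Diff convex_real_sets_borel convex_thicken)
  ultimately have "emeasure lborel {t. p + t *\<^sub>R v \<in> thicken C v d - C} \<le> emeasure lborel (thicken J 1 d - J)"
    by (intro emeasure_mono) auto
  also have "\<dots> \<le> ennreal (2 * d)"
    by (rule emeasure_thicken_real_diff_le[OF \<open>convex J\<close> d])
  finally show ?thesis .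
qed

text \<open>Each line parallel to \<open>b\<close> meets \<open>thicken C b d - C\<close> in a set of length at most \<open>2 d\<close>,
  on which \<open>f\<close> is bounded by its value on the hyperplane \<open>x \<bullet> b = 0\<close>.\<close>

lemma nn_integral_thicken_diff_le:
  fixes f :: "'a::euclidean_space \<Rightarrow> ennreal"
  assumes [measurable]: "f \<in> borel_measurable borel" and b: "b \<in> Basis"
    and C: "closed C" "convex C" and d: "0 \<le> d"
    and mono: "\<And>q t. q \<bullet> b = 0 \<Longrightarrow> f (q + t *\<^sub>R b) \<le> f q"
  shows "(\<integral>\<^sup>+x. f x * indicator (thicken C b d - C) x \<partial>lborel) \<le> ennreal (2 * d) * marginal f (Basis - {b}) 0"
proof -
  have [measurable]: "thicken C b d - C \<in> sets borel"
    using closed_thicken[OF C(1)] C(1) by (intro sets.Diff borel_closed)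
  define q where "q z = (\<Sum>b'\<in>Basis - {b}. z b' *\<^sub>R b')" for z :: "'a \<Rightarrow> real"
  have fibre: "(\<integral>\<^sup>+t. f (t *\<^sub>R b + q z) * indicator (thicken C b d - C) (t *\<^sub>R b + q z) \<partial>lborel)
      \<le> ennreal (2 * d) * f (q z)" for z
  proof -
    have qb: "q z \<bullet> b = 0" using b by (simp add: q_def inner_sum_left inner_not_same_Basis)
    have "(\<integral>\<^sup>+t. f (t *\<^sub>R b + q z) * indicator (thicken C b d - C) (t *\<^sub>R b + q z) \<partial>lborel)
        \<le> (\<integral>\<^sup>+t. f (q z) * indicator {t. q z + t *\<^sub>R b \<in> thicken C b d - C} t \<partial>lborel)"
      using mono[OF qb] by (intro nn_integral_mono) (auto split: split_indicator simp: add.commute)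
    also have "\<dots> = f (q z) * emeasure lborel {t. q z + t *\<^sub>R b \<in> thicken C b d - C}"
      by (rule nn_integral_cmult_indicator) measurable
    also have "\<dots> \<le> ennreal (2 * d) * f (q z)"
      using emeasure_line_thicken_diff_le[OF C(2) d] by (simp add: mult.commute mult_left_mono)
    finally show ?thesis .
  qed
  have "(\<integral>\<^sup>+x. f x * indicator (thicken C b d - C) x \<partial>lborel)
      \<le> (\<integral>\<^sup>+z. ennreal (2 * d) * f (q z) \<partial>(\<Pi>\<^sub>M b'\<in>Basis - {b}. lborel))"
    unfolding nn_integral_lborel_fibres[OF _ b, of "\<lambda>x. f x * indicator (thicken C b d - C) x", simplified]
      q_def[symmetric]
    by (intro nn_integral_mono fibre)
  also have "\<dots> = ennreal (2 * d) * marginal f (Basis - {b}) 0"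
    using marginal_scaleR_Basis[where f = f and J = "Basis - {b}" and b = b and t = 0] b
    by (simp add: nn_integral_cmult q_def)
  finally show ?thesis .
qed

definition coord_thicken :: "'a::euclidean_space set \<Rightarrow> real \<Rightarrow> 'a set \<Rightarrow> 'a set" where
  "coord_thicken A d S = {a + (\<Sum>b\<in>S. s b *\<^sub>R b) | a s. a \<in> A \<and> (\<forall>b\<in>S. \<bar>s b\<bar> \<le> d)}"

lemma coord_thicken_empty [simp]: "coord_thicken A d {} = A"
  unfolding coord_thicken_def by auto

lemma coord_thicken_insert:
  assumes "finite S" "b \<notin> S"
  shows "coord_thicken A d (insert b S) = thicken (coord_thicken A d S) b d"
proof (intro set_eqI iffI)
  fix x assume "x \<in> coord_thicken A d (insert b S)"
  then obtain a s where x: "x = a + (\<Sum>b\<in>insert b S. s b *\<^sub>R b)" "a \<in> A" "\<forall>b'\<in>insert b S. \<bar>s b'\<bar> \<le> d"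
    unfolding coord_thicken_def by blast
  have "x = (a + (\<Sum>b\<in>S. s b *\<^sub>R b)) + s b *\<^sub>R b" using x(1) assms by (simp add: algebra_simps)
  moreover have "a + (\<Sum>b\<in>S. s b *\<^sub>R b) \<in> coord_thicken A d S" unfolding coord_thicken_def using x by blast
  ultimately show "x \<in> thicken (coord_thicken A d S) b d" unfolding thicken_def using x(3) by blast
next
  fix x assume "x \<in> thicken (coord_thicken A d S) b d"
  then obtain a s t where x: "x = (a + (\<Sum>b\<in>S. s b *\<^sub>R b)) + t *\<^sub>R b" "a \<in> A" "\<forall>b\<in>S. \<bar>s b\<bar> \<le> d" "\<bar>t\<bar> \<le> d"
    unfolding thicken_def coord_thicken_def by blast
  have "(\<Sum>b'\<in>S. (s(b := t)) b' *\<^sub>R b') = (\<Sum>b'\<in>S. s b' *\<^sub>R b')"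
    using assms(2) by (intro sum.cong) auto
  then have "x = a + (\<Sum>b'\<in>insert b S. (s(b := t)) b' *\<^sub>R b')" using x(1) assms by (simp add: algebra_simps)
  moreover have "\<forall>b'\<in>insert b S. \<bar>(s(b := t)) b'\<bar> \<le> d" using x(3,4) by auto
  ultimately show "x \<in> coord_thicken A d (insert b S)" unfolding coord_thicken_def using x(2) by blast
qed

lemma closed_convex_coord_thicken:
  assumes "finite S" "closed A" "convex A"
  shows "closed (coord_thicken A d S) \<and> convex (coord_thicken A d S)"
  using assms(1) by induction (use assms in \<open>simp_all add: coord_thicken_insert closed_thicken convex_thicken\<close>)

lemma subset_coord_thicken: "0 \<le> d \<Longrightarrow> A \<subseteq> coord_thicken A d S"
  unfolding coord_thicken_def by (force intro: exI[of _ "\<lambda>_. 0"])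

lemma add_mem_coord_thicken_Basis:
  assumes "a \<in> A" "norm (y :: 'a::euclidean_space) \<le> d"
  shows "a + y \<in> coord_thicken A d Basis"
proof -
  have "y = (\<Sum>b\<in>Basis. (y \<bullet> b) *\<^sub>R b)" by (simp add: euclidean_representation)
  moreover have "\<forall>b\<in>Basis. \<bar>y \<bullet> b\<bar> \<le> d" using assms(2) Basis_le_norm order_trans by blast
  ultimately show ?thesis unfolding coord_thicken_def using assms(1)
    by (intro CollectI exI[of _ a] exI[of _ "\<lambda>b. y \<bullet> b"]) simp
qed

lemma nn_integral_coord_thicken_diff_le:
  fixes f :: "'a::euclidean_space \<Rightarrow> ennreal"
  assumes [measurable]: "f \<in> borel_measurable borel"
    and A: "closed A" "convex A" and d: "0 \<le> d"
    and mono: "\<And>b q t. b \<in> Basis \<Longrightarrow> q \<bullet> b = 0 \<Longrightarrow> f (q + t *\<^sub>R b) \<le> f q"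
  shows "S \<subseteq> Basis \<Longrightarrow> (\<integral>\<^sup>+x. f x * indicator (coord_thicken A d S - A) x \<partial>lborel)
     \<le> ennreal (2 * d) * (\<Sum>b\<in>S. marginal f (Basis - {b}) 0)"
proof (induction S rule: infinite_finite_induct)
  case (infinite S)
  then show ?case using finite_subset[OF _ finite_Basis] by blast
next
  case (insert b S)
  define B where "B = coord_thicken A d S"
  have B: "closed B" "convex B" "A \<subseteq> B"
    using closed_convex_coord_thicken[OF insert(1) A] subset_coord_thicken[OF d] by (auto simp: B_def)
  have [measurable]: "thicken B b d - B \<in> sets borel" "B - A \<in> sets borel"
    using B A(1) closed_thicken[OF B(1)] by (auto intro!: sets.Diff borel_closed)
  have "(\<integral>\<^sup>+x. f x * indicator (coord_thicken A d (insert b S) - A) x \<partial>lborel)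
      \<le> (\<integral>\<^sup>+x. f x * indicator (thicken B b d - B) x + f x * indicator (B - A) x \<partial>lborel)"
    unfolding B_def coord_thicken_insert[OF insert(1,2)] using B(3)
    by (intro nn_integral_mono) (auto simp: B_def split: split_indicator)
  also have "\<dots> = (\<integral>\<^sup>+x. f x * indicator (thicken B b d - B) x \<partial>lborel) + (\<integral>\<^sup>+x. f x * indicator (B - A) x \<partial>lborel)"
    by (rule nn_integral_add) measurable
  also have "\<dots> \<le> ennreal (2 * d) * marginal f (Basis - {b}) 0 + ennreal (2 * d) * (\<Sum>b\<in>S. marginal f (Basis - {b}) 0)"
    using insert(3,4) mono B(1,2) d unfolding B_def
    by (intro add_mono nn_integral_thicken_diff_le) auto
  finally show ?case using insert(1,2) by (simp add: distrib_left)
qed simp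

section \<open>Isotropic unconditional log-concave densities\<close>

lemma unconditional_density_reflect_line:
  fixes f :: "real^'n \<Rightarrow> real"
  assumes unc: "unconditional_density f" and b: "b \<in> Basis" and q: "q \<bullet> b = 0"
  shows "f (q - t *\<^sub>R b) = f (q + t *\<^sub>R b)"
proof -
  obtain i where i: "b = axis i 1" using b by (auto simp: Basis_vec_def)
  define s where "s k = (if k = i then -1 else 1 :: real)" for k
  have "q $ i = 0" using q by (simp add: i cart_eq_inner_axis)
  then have "(\<chi> k. s k * (q + t *\<^sub>R b) $ k) = q - t *\<^sub>R b"
    by (auto simp: vec_eq_iff s_def axis_def i)
  moreover have "\<forall>k. s k \<in> {-1, 1}" by (simp add: s_def)
  ultimately show ?thesis using unc unfolding unconditional_density_def by metis
qed

lemma unconditional_log_concave_coordinate_mono: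
  fixes f :: "real^'n \<Rightarrow> real"
  assumes unc: "unconditional_density f" and lc: "log_concave_fun f"
    and b: "b \<in> Basis" and q: "q \<bullet> b = 0"
  shows "ennreal (f (q + t *\<^sub>R b)) \<le> ennreal (f q)"
  using log_concave_ennreal_symmetric_le[OF log_concave_ennreal_of_real[OF lc], of q "t *\<^sub>R b"]
    unconditional_density_reflect_line[OF unc b q] by simp

lemma nn_integral_prob_density:
  assumes "prob_density f"
  shows "(\<integral>\<^sup>+x. ennreal (f x) \<partial>lborel) = 1"
proof -
  have "(\<integral>\<^sup>+x. ennreal (f x) \<partial>lborel) = (\<integral>\<^sup>+x. ennreal (f x) \<partial>lebesgue)"
    by (simp add: nn_integral_completion)
  also have "\<dots> = 1"
    using assms unfolding prob_density_def by (subst nn_integral_eq_integral) auto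
  finally show ?thesis .
qed

lemma nn_integral_isotropic_density:
  assumes "isotropic_density f" "\<And>x. 0 \<le> f x"
  shows "(\<integral>\<^sup>+x. ennreal ((x $ i)\<^sup>2 * f x) \<partial>lborel) = 1"
proof -
  have "(\<integral>\<^sup>+x. ennreal ((x $ i)\<^sup>2 * f x) \<partial>lborel) = (\<integral>\<^sup>+x. ennreal (x $ i * x $ i * f x) \<partial>lebesgue)"
    by (simp add: nn_integral_completion power2_eq_square)
  also have "\<dots> = 1"
    using assms unfolding isotropic_density_def by (subst nn_integral_eq_integral) auto
  finally show ?thesis .
qed

lemma coordinate_marginal_at_zero_le:
  fixes f :: "real^'n \<Rightarrow> real"
  assumes pd: "prob_density f" and lc: "log_concave_fun f" and iso: "isotropic_density f"
    and unc: "unconditional_density f" and cont: "continuous_on UNIV f" and b: "b \<in> Basis"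
  shows "marginal (\<lambda>x. ennreal (f x)) (Basis - {b}) 0 \<le> ennreal (1 / sqrt 2)"
proof -
  obtain i where i: "b = axis i 1" using b by (auto simp: Basis_vec_def)
  define F where "F x = ennreal (f x)" for x
  have [measurable]: "F \<in> borel_measurable borel"
    unfolding F_def using borel_measurable_continuous_onI[OF cont] by measurable
  have f_nonneg: "0 \<le> f x" for x using pd by (simp add: prob_density_def)
  define m where "m t = marginal F (Basis - {b}) (t *\<^sub>R b)" for t
  have lcF: "log_concave_ennreal F" unfolding F_def by (rule log_concave_ennreal_of_real[OF lc])
  have "log_concave_ennreal (marginal F (Basis - {b}))"
    by (rule log_concave_marginal[OF \<open>F \<in> borel_measurable borel\<close> lcF]) auto
  from log_concave_ennreal_line[OF this, of 0 b] have "log_concave_ennreal m"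
    by (simp add: m_def[abs_def])
  moreover have "m (- t) = m t" for t
  proof -
    have "(\<Sum>b'\<in>Basis - {b}. z b' *\<^sub>R b') \<bullet> b = 0" for z
      using b by (simp add: inner_sum_left inner_not_same_Basis)
    then have "F ((- t) *\<^sub>R b + (\<Sum>b'\<in>Basis - {b}. z b' *\<^sub>R b')) = F (t *\<^sub>R b + (\<Sum>b'\<in>Basis - {b}. z b' *\<^sub>R b'))" for z
      using unconditional_density_reflect_line[OF unc b] by (simp add: F_def add.commute)
    moreover have J: "Basis - {b} \<subseteq> Basis" "b \<notin> Basis - {b}" by auto
    ultimately show ?thesis
      unfolding m_def marginal_scaleR_Basis[OF J(1) b J(2)] by (intro nn_integral_cong) simp
  qed
  moreover have "(\<integral>\<^sup>+t. m t \<partial>lborel) = 1"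
    using nn_integral_coordinate_marginal[of F "\<lambda>_. 1" b] b nn_integral_prob_density[OF pd]
    by (simp add: m_def F_def)
  moreover have "(\<integral>\<^sup>+t. ennreal (t\<^sup>2) * m t \<partial>lborel) = 1"
    using nn_integral_coordinate_marginal[of F "\<lambda>t. ennreal (t\<^sup>2)" b] b
      nn_integral_isotropic_density[OF iso f_nonneg, of i] f_nonneg
    by (simp add: m_def F_def i cart_eq_inner_axis ennreal_mult)
  ultimately have "m 0 \<le> ennreal (1 / sqrt 2)" by (rule even_log_concave_density_at_zero_le)
  then show ?thesis by (simp add: m_def F_def[abs_def])
qed

lemma emeasure_dens_measure:
  assumes [measurable]: "f \<in> borel_measurable borel" "X \<in> sets lebesgue"
  shows "emeasure (dens_measure f) X = (\<integral>\<^sup>+x. ennreal (f x) * indicator X x \<partial>lebesgue)"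
  unfolding dens_measure_def by (rule emeasure_density) (auto intro: measurable_completion)

lemma emeasure_dens_measure_null:
  assumes "f \<in> borel_measurable borel" "N \<in> null_sets lebesgue"
  shows "emeasure (dens_measure f) N = 0"
proof -
  have "AE x in lebesgue. ennreal (f x) * indicator N x = 0"
    using AE_not_in[OF assms(2)] by (auto elim!: eventually_mono)
  from nn_integral_cong_AE[OF this] show ?thesis
    using assms by (subst emeasure_dens_measure) (auto dest: null_setsD2)
qed

lemma eps_nbhd_diff_subset:
  "eps_nbhd A e - A \<subseteq> (coord_thicken (closure A) e Basis - closure A) \<union> frontier A"
proof
  fix x assume "x \<in> eps_nbhd A e - A"
  then obtain a y where x: "x = a + y" "a \<in> A" "norm y \<le> e" "x \<notin> A"
    unfolding eps_nbhd_def by (auto simp: dist_norm)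
  then have "x \<in> coord_thicken (closure A) e Basis"
    using closure_subset by (auto intro: add_mem_coord_thicken_Basis)
  moreover have "x \<notin> closure A \<or> x \<in> frontier A"
    using x(4) interior_subset[of A] by (auto simp: frontier_def)
  ultimately show "x \<in> (coord_thicken (closure A) e Basis - closure A) \<union> frontier A" by blast
qed

lemma measure_eps_nbhd_diff_le:
  fixes f :: "real^'n \<Rightarrow> real"
  assumes pd: "prob_density f" and lc: "log_concave_fun f" and iso: "isotropic_density f"
    and unc: "unconditional_density f" and cont: "continuous_on UNIV f"
    and A: "convex A" and e: "0 < e"
  shows "measure (dens_measure f) (eps_nbhd A e - A) \<le> sqrt 2 * real CARD('n) * e"
proof -
  have [measurable]: "f \<in> borel_measurable borel" by (rule borel_measurable_continuous_onI[OF cont])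
  define X where "X = coord_thicken (closure A) e Basis - closure A"
  have [measurable]: "X \<in> sets borel"
    using closed_convex_coord_thicken[OF finite_Basis closed_closure convex_closure[OF A]]
    unfolding X_def by (intro sets.Diff borel_closed) auto
  have null: "frontier A \<in> null_sets lebesgue"
    using negligible_convex_frontier[OF A] by (simp add: negligible_iff_null_sets)
  have "emeasure (dens_measure f) (eps_nbhd A e - A) \<le> emeasure (dens_measure f) X + emeasure (dens_measure f) (frontier A)"
    using eps_nbhd_diff_subset[of A e] null unfolding X_def[symmetric]
    by (intro order_trans[OF emeasure_mono emeasure_subadditive]) (auto simp: dens_measure_def)
  also have "emeasure (dens_measure f) (frontier A) = 0"
    using null by (simp add: emeasure_dens_measure_null)
  also have "emeasure (dens_measure f) X = (\<integral>\<^sup>+x. ennreal (f x) * indicator X x \<partial>lborel)"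
    by (simp add: emeasure_dens_measure nn_integral_completion)
  also have "\<dots> \<le> ennreal (2 * e) * (\<Sum>b\<in>Basis. marginal (\<lambda>x. ennreal (f x)) (Basis - {b}) 0)"
    unfolding X_def using e unconditional_log_concave_coordinate_mono[OF unc lc] convex_closure[OF A]
    by (intro nn_integral_coord_thicken_diff_le) auto
  also have "\<dots> \<le> ennreal (2 * e) * (\<Sum>b\<in>(Basis :: (real^'n) set). ennreal (1 / sqrt 2))"
    by (intro mult_left_mono sum_mono coordinate_marginal_at_zero_le[OF pd lc iso unc cont]) auto
  also have "\<dots> = ennreal (sqrt 2 * real CARD('n) * e)"
  proof -
    have "2 * e * real CARD('n) / sqrt 2 = sqrt 2 * real CARD('n) * e"
      by (simp add: field_simps)
    then show ?thesis using e by (simp add: ennreal_of_nat_eq_real_of_nat flip: ennreal_mult)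
  qed
  finally show ?thesis
    unfolding measure_def using e by (intro enn2real_leI) auto
qed

lemma boundary_measure_le:
  assumes "\<And>e. 0 < e \<Longrightarrow> measure \<mu> (eps_nbhd A e - A) \<le> C * e"
  shows "boundary_measure \<mu> A \<le> ereal C"
proof -
  have "eventually (\<lambda>e. ereal (measure \<mu> (eps_nbhd A e - A) / e) \<le> ereal C) (at_right 0)"
    using eventually_at_right_less[of "0::real"]
    by (rule eventually_mono) (use assms in \<open>simp add: divide_le_eq\<close>)
  then have "Limsup (at_right 0) (\<lambda>e. ereal (measure \<mu> (eps_nbhd A e - A) / e)) \<le> ereal C"
    by (rule Limsup_bounded)
  then show ?thesis
    unfolding boundary_measure_def using Liminf_le_Limsup[of "at_right (0::real)"] order_trans by fastforce
qed

theorem theorem5p7: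
  fixes f :: "real^'n \<Rightarrow> real"
  assumes "prob_density f"
    and "log_concave_fun f"
    and "isotropic_density f"
    and "unconditional_density f"
    and "continuous_on UNIV f"
  shows "(\<forall>A e. convex A \<and> 0 < e \<longrightarrow>
            measure (dens_measure f) (eps_nbhd A e - A) \<le> sqrt 2 * real CARD('n) * e)
       \<and> (\<forall>A. convex A \<longrightarrow> boundary_measure (dens_measure f) A \<le> ereal (sqrt 2 * real CARD('n)))
       \<and> Gamma_measure (dens_measure f) \<le> ereal (sqrt 2 * real CARD('n))"
proof (intro conjI allI impI)
  show neighbourhood: "measure (dens_measure f) (eps_nbhd A e - A) \<le> sqrt 2 * real CARD('n) * e"
    if "convex A \<and> 0 < e" for A e
    using measure_eps_nbhd_diff_le[OF assms] that by blast
  show boundary: "boundary_measure (dens_measure f) A \<le> ereal (sqrt 2 * real CARD('n))"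
    if "convex A" for A
    using that by (intro boundary_measure_le) (simp add: neighbourhood)
  show "Gamma_measure (dens_measure f) \<le> ereal (sqrt 2 * real CARD('n))"
    unfolding Gamma_measure_def by (rule SUP_least) (simp add: convex_body_def boundary)
qed

end
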